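(* Consider the multiple regression model $\mathbf{y}_n=\mathbf{X}_n\boldsymbol\beta+\boldsymbol\varepsilon_n$, where $\{x_{ij}\}$ ($i=1,2,\ldots$; $j=1,\ldots,p$) is an arbitrary double array of random variables, $\mathbf{X}_n=(x_{ij})_{1\leqslant i\leqslant n,1\leqslant j\leqslant p}$, $\boldsymbol\beta\in\mathbb{R}^p$, $\boldsymbol\varepsilon_n=(\varepsilon_1,\ldots,\varepsilon_n)'$, and $\boldsymbol{\widehat\beta}_n=\boldsymbol\beta+(\mathbf{X}_n'\mathbf{X}_n)^{-1}\mathbf{X}_n'\boldsymbol\varepsilon_n$ (defined when $\mathbf{X}_n'\mathbf{X}_n$ is non-singular). Suppose $\{\varepsilon_n,n\geqslant1\}$ is a sequence of pairwise PQD random variables stochastically dominated by a random variable $\varepsilon$ with $\mathbb{E}\varepsilon^2<\infty$ and \[ \sum_{1\leqslant k<j<\infty}\int_j^\infty t^{-2}\left[G_{\varepsilon_k^+,\varepsilon_j^+}(\sqrt t)+G_{\varepsilon_k^-,\varepsilon_j^-}(\sqrt t)\right]\mathrm{d}t<\infty . \] If $\mathbf{X}_n'\mathbf{X}_n$ is non-singular a.s. for some $n\geqslant p$ and $\rho\big((\mathbf{X}_n'\mathbf{X}_n)^{-1}\big)=o(n^{-1})$ a.s., then $\boldsymbol{\widehat\beta}_n\to\boldsymbol\beta$ almost surely.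
   Context: $\rho(\mathbf{A})$ denotes the spectral radius $\sup\{|\lambda|:\lambda\text{ eigenvalue of }\mathbf{A}\}$. $Z^+=\max(Z,0)$, $Z^-=\max(-Z,0)$. A sequence $\{\varepsilon_n\}$ is pairwise PQD if $\mathbb{P}\{\varepsilon_k\leqslant x,\varepsilon_j\leqslant y\}-\mathbb{P}\{\varepsilon_k\leqslant x\}\mathbb{P}\{\varepsilon_j\leqslant y\}\geqslant0$ for all reals $x,y$ and all $k\neq j$. $\{\varepsilon_n\}$ is stochastically dominated by $\varepsilon$ if there is $C>0$ with $\sup_n\mathbb{P}\{|\varepsilon_n|>t\}\leqslant C\,\mathbb{P}\{|\varepsilon|>t\}$ for all $t>0$. For random variables $X,Y$ and $t>0$, $g_t(s)=\max(\min(s,t),-t)$, $\Delta_{X,Y}(x,y)=\mathbb{P}\{X\leqslant x,Y\leqslant y\}-\mathbb{P}\{X\leqslant x\}\mathbb{P}\{Y\leqslant y\}$, and $G_{X,Y}(t)=\mathrm{Cov}(g_t(X),g_t(Y))=\int_{-t}^t\int_{-t}^t\Delta_{X,Y}(x,y)\,\mathrm{d}x\,\mathrm{d}y$. *)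

theory Defs
  imports "HOL-Probability.Probability"
begin

definition trunc_g :: "real \<Rightarrow> real \<Rightarrow> real" where
  "trunc_g t s = max (min s t) (- t)"

definition G_cov :: "'a measure \<Rightarrow> ('a \<Rightarrow> real) \<Rightarrow> ('a \<Rightarrow> real) \<Rightarrow> real \<Rightarrow> real" where
  "G_cov M X Y t =
     (\<integral>\<omega>. trunc_g t (X \<omega>) * trunc_g t (Y \<omega>) \<partial>M)
     - (\<integral>\<omega>. trunc_g t (X \<omega>) \<partial>M) * (\<integral>\<omega>. trunc_g t (Y \<omega>) \<partial>M)"

definition spec_radius :: "real^'n^'n \<Rightarrow> real" where
  "spec_radius A = Sup {cmod l | l. \<exists>v :: complex^'n. v \<noteq> 0 \<and>
       (\<chi> i j. complex_of_real (A $ i $ j)) *v v = l *s v}"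

definition pairwise_PQD :: "'a measure \<Rightarrow> (nat \<Rightarrow> 'a \<Rightarrow> real) \<Rightarrow> bool" where
  "pairwise_PQD M e \<longleftrightarrow> (\<forall>k j x y. 1 \<le> k \<and> 1 \<le> j \<and> k \<noteq> j \<longrightarrow>
      measure M {\<omega>\<in>space M. e k \<omega> \<le> x \<and> e j \<omega> \<le> y}
      - measure M {\<omega>\<in>space M. e k \<omega> \<le> x} * measure M {\<omega>\<in>space M. e j \<omega> \<le> y} \<ge> 0)"

definition stoch_dominated :: "'a measure \<Rightarrow> (nat \<Rightarrow> 'a \<Rightarrow> real) \<Rightarrow> ('a \<Rightarrow> real) \<Rightarrow> bool" where
  "stoch_dominated M e Z \<longleftrightarrow> (\<exists>C>0. \<forall>n\<ge>1. \<forall>t>0.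
      measure M {\<omega>\<in>space M. \<bar>e n \<omega>\<bar> > t} \<le> C * measure M {\<omega>\<in>space M. \<bar>Z \<omega>\<bar> > t})"

text \<open>X_n' X_n = sum_{i=1}^n x_i x_i' where x_i is the i-th row of X_n.\<close>
definition XtX :: "(nat \<Rightarrow> 'a \<Rightarrow> real^'p) \<Rightarrow> nat \<Rightarrow> 'a \<Rightarrow> real^'p^'p" where
  "XtX x n \<omega> = (\<Sum>i\<in>{1..n}. (\<chi> a b. x i \<omega> $ a * x i \<omega> $ b))"

definition Xteps :: "(nat \<Rightarrow> 'a \<Rightarrow> real^'p) \<Rightarrow> (nat \<Rightarrow> 'a \<Rightarrow> real) \<Rightarrow> nat \<Rightarrow> 'a \<Rightarrow> real^'p" where
  "Xteps x e n \<omega> = (\<Sum>i\<in>{1..n}. e i \<omega> *\<^sub>R x i \<omega>)"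

definition beta_hat :: "real^'p \<Rightarrow> (nat \<Rightarrow> 'a \<Rightarrow> real^'p) \<Rightarrow> (nat \<Rightarrow> 'a \<Rightarrow> real) \<Rightarrow> nat \<Rightarrow> 'a \<Rightarrow> real^'p" where
  "beta_hat \<beta> x e n \<omega> = \<beta> + matrix_inv (XtX x n \<omega>) *v Xteps x e n \<omega>"

end

theory Submission
  imports Defs
begin

(*
  For A = X_n' X_n the error u = beta_hat n - beta solves A u = X_n' eps_n, so that
  u' A u = sum_i eps_i (x_i . u) <= (eps_n' eps_n + u' A u) / 2, i.e. u' A u <= sum_{i<=n} eps_i^2.
  As u' A u >= |u|^2 / rho(A^-1), we get |beta_hat n - beta|^2 <= n rho(A^-1) * (1/n) sum_{i<=n} eps_i^2,
  and it suffices to show that sum_{i<=n} eps_i^2 = O(n) almost surely.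

  This is shown separately for the positive and the negative parts W_i of the errors, along
  dyadic blocks. For t in [2^m, 2^(m+1)), truncating the W_i at sqrt t and applying Chebyshev's
  inequality bounds P(sum_{i<=2^m} W_i^2 > K 2^m) by a term that is summable in m because
  E eps^2 < oo, plus 2^-m sum_{k<j<=2^m} G_{W_k,W_j}(sqrt t). This is where Hoeffding's covariance
  identity enters: for PQD variables G >= 0 and Cov(min(W_k,s)^2, min(W_j,s)^2) <= 4 s^2 G_{W_k,W_j}(s).
  Averaging over t turns the G-term into the covariance series of the hypothesis, and the
  Borel-Cantelli lemma concludes.
*)

section \<open>Step approximations and Hoeffding's covariance identity\<close>

(* R u x reads "u exceeds the level x". Both readings occur: pairwise PQD is about the events
   eps <= x, whose complements are strict exceedances of the positive part of eps but
   non-strict exceedances of its negative part. *)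
definition exceedance :: "(real \<Rightarrow> real \<Rightarrow> bool) \<Rightarrow> bool" where
  "exceedance R \<longleftrightarrow> (\<forall>u x. x < u \<longrightarrow> R u x) \<and> (\<forall>u x. R u x \<longrightarrow> x \<le> u)"

lemma exceedanceD:
  assumes "exceedance R"
  shows exceedance_less: "x < u \<Longrightarrow> R u x" and exceedance_le: "R u x \<Longrightarrow> x \<le> u"
  using assms unfolding exceedance_def by auto

lemma exceedance_strict: "exceedance (\<lambda>u x. x < u)"
  and exceedance_nonstrict: "exceedance (\<lambda>u x. x \<le> u)"
  unfolding exceedance_def by auto

(* Approximates g (min u s) - g 0 from above; its expectation is a combination of exceedance
   probabilities, the discrete form of Hoeffding's covariance identity. *)
definition step_approx :: "(real \<Rightarrow> real) \<Rightarrow> (real \<Rightarrow> real \<Rightarrow> bool) \<Rightarrow> real \<Rightarrow> nat \<Rightarrow> real \<Rightarrow> real" where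
  "step_approx g R s n u =
     (\<Sum>k<n. (g (real (Suc k) * (s / n)) - g (real k * (s / n))) * of_bool (R u (real k * (s / n))))"

lemma step_approx_lower:
  assumes g: "mono_on {0..} g" and R: "exceedance R" and "0 < s" "0 < n" "0 \<le> u"
  shows "g (min u s) - g 0 \<le> step_approx g R s n u"
proof -
  define h where "h = s / n"
  have h: "0 < h" "real n * h = s" using assms by (auto simp: h_def)
  have "g (min u s) - g 0 = (\<Sum>k<n. g (min u (real (Suc k) * h)) - g (min u (real k * h)))"
    using sum_lessThan_telescope[of "\<lambda>k. g (min u (real k * h))" n] h \<open>0 \<le> u\<close> by simp
  also have "\<dots> \<le> (\<Sum>k<n. (g (real (Suc k) * h) - g (real k * h)) * of_bool (R u (real k * h)))"
  proof (rule sum_mono)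
    fix k
    show "g (min u (real (Suc k) * h)) - g (min u (real k * h))
        \<le> (g (real (Suc k) * h) - g (real k * h)) * of_bool (R u (real k * h))"
    proof (cases "R u (real k * h)")
      case True
      then have "min u (real k * h) = real k * h" using exceedance_le[OF R] by (simp add: min_absorb2)
      moreover have "g (min u (real (Suc k) * h)) \<le> g (real (Suc k) * h)"
        using h \<open>0 \<le> u\<close> by (intro mono_onD[OF g]) auto
      ultimately show ?thesis using True by simp
    next
      case False
      then have "u \<le> real k * h" using exceedance_less[OF R, of "real k * h" u] by linarith
      moreover have "real k * h \<le> real (Suc k) * h" using h by (intro mult_right_mono) auto
      ultimately show ?thesis using False by (simp add: min_def)
    qed
  qed
  finally show ?thesis unfolding step_approx_def h_def .
qed

lemma step_approx_upper:
  assumes g: "mono_on {0..} g" and R: "exceedance R" and "0 < s" "0 < n" "0 \<le> u"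
  shows "step_approx g R s n u \<le> g (min (u + s / n) s) - g 0"
proof -
  define h where "h = s / n"
  have h: "0 < h" "real n * h = s" using assms by (auto simp: h_def)
  have "(\<Sum>k<n. (g (real (Suc k) * h) - g (real k * h)) * of_bool (R u (real k * h)))
      \<le> (\<Sum>k<n. g (min (u + h) (real (Suc k) * h)) - g (min (u + h) (real k * h)))"
  proof (rule sum_mono)
    fix k
    show "(g (real (Suc k) * h) - g (real k * h)) * of_bool (R u (real k * h))
        \<le> g (min (u + h) (real (Suc k) * h)) - g (min (u + h) (real k * h))"
    proof (cases "R u (real k * h)")
      case True
      then have "real k * h \<le> u" by (rule exceedance_le[OF R])
      then have "min (u + h) (real k * h) = real k * h" "min (u + h) (real (Suc k) * h) = real (Suc k) * h"
        using h by (auto simp: min_def algebra_simps)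
      then show ?thesis using True by simp
    next
      case False
      have "g (min (u + h) (real k * h)) \<le> g (min (u + h) (real (Suc k) * h))"
        using h \<open>0 \<le> u\<close> by (intro mono_onD[OF g]) (auto simp: min_def algebra_simps)
      then show ?thesis using False by simp
    qed
  qed
  also have "\<dots> = g (min (u + h) s) - g 0"
    using sum_lessThan_telescope[of "\<lambda>k. g (min (u + h) (real k * h))" n] h \<open>0 \<le> u\<close> by simp
  finally show ?thesis unfolding step_approx_def h_def .
qed

lemma step_approx_abs_le:
  assumes g: "mono_on {0..} g" and R: "exceedance R" and "0 < s" "0 \<le> u"
  shows "\<bar>step_approx g R s n u\<bar> \<le> g s - g 0"
proof (cases "n = 0")
  case True
  have "g 0 \<le> g s" using \<open>0 < s\<close> by (intro mono_onD[OF g]) auto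
  then show ?thesis using True by (simp add: step_approx_def)
next
  case False
  have "g 0 \<le> g (min u s)" "g (min (u + s / n) s) \<le> g s"
    using assms by (auto intro!: mono_onD[OF g])
  moreover have "g (min u s) - g 0 \<le> step_approx g R s n u"
    using step_approx_lower[OF g R] assms False by simp
  moreover have "step_approx g R s n u \<le> g (min (u + s / n) s) - g 0"
    using step_approx_upper[OF g R] assms False by simp
  ultimately show ?thesis by linarith
qed

lemma tendsto_step_approx:
  assumes g: "mono_on {0..} g" "continuous_on UNIV g" and R: "exceedance R" and "0 < s" "0 \<le> u"
  shows "(\<lambda>n. step_approx g R s n u) \<longlonglongrightarrow> g (min u s) - g 0"
proof (rule real_tendsto_sandwich)
  show "\<forall>\<^sub>F n in sequentially. g (min u s) - g 0 \<le> step_approx g R s n u"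
    using eventually_gt_at_top[of 0] by eventually_elim (use step_approx_lower[OF g(1) R] assms in auto)
  show "\<forall>\<^sub>F n in sequentially. step_approx g R s n u \<le> g (min (u + s / n) s) - g 0"
    using eventually_gt_at_top[of 0] by eventually_elim (use step_approx_upper[OF g(1) R] assms in auto)
  have "(\<lambda>n. min (u + s / real n) s) \<longlonglongrightarrow> min (u + 0) s"
    by (intro tendsto_intros lim_const_over_n)
  then show "(\<lambda>n. g (min (u + s / real n) s) - g 0) \<longlonglongrightarrow> g (min u s) - g 0"
    using g(2) by (intro tendsto_intros) (simp add: continuous_on_tendsto_compose[of UNIV g])
qed simp

definition covariance :: "'a measure \<Rightarrow> ('a \<Rightarrow> real) \<Rightarrow> ('a \<Rightarrow> real) \<Rightarrow> real" where
  "covariance M X Y = (\<integral>\<omega>. X \<omega> * Y \<omega> \<partial>M) - (\<integral>\<omega>. X \<omega> \<partial>M) * (\<integral>\<omega>. Y \<omega> \<partial>M)"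

lemma G_cov_eq_covariance_min:
  assumes "\<And>\<omega>. \<omega> \<in> space M \<Longrightarrow> 0 \<le> X \<omega>" "\<And>\<omega>. \<omega> \<in> space M \<Longrightarrow> 0 \<le> Y \<omega>" "0 \<le> s"
  shows "G_cov M X Y s = covariance M (\<lambda>\<omega>. min (X \<omega>) s) (\<lambda>\<omega>. min (Y \<omega>) s)"
proof -
  have "trunc_g s (X \<omega>) = min (X \<omega>) s" "trunc_g s (Y \<omega>) = min (Y \<omega>) s" if "\<omega> \<in> space M" for \<omega>
    using assms(1,2)[OF that] assms(3) by (auto simp: trunc_g_def max_def min_def)
  then show ?thesis
    unfolding G_cov_def covariance_def by (simp cong: Bochner_Integration.integral_cong)
qed

definition PQD_tails :: "'a measure \<Rightarrow> (real \<Rightarrow> real \<Rightarrow> bool) \<Rightarrow> ('a \<Rightarrow> real) \<Rightarrow> ('a \<Rightarrow> real) \<Rightarrow> bool" where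
  "PQD_tails M R X Y \<longleftrightarrow> (\<forall>x\<ge>0. \<forall>y\<ge>0.
     0 \<le> measure M {\<omega>\<in>space M. R (X \<omega>) x \<and> R (Y \<omega>) y}
          - measure M {\<omega>\<in>space M. R (X \<omega>) x} * measure M {\<omega>\<in>space M. R (Y \<omega>) y})"

context prob_space
begin

lemma integrable_of_bool:
  assumes "Measurable.pred M P"
  shows "integrable M (\<lambda>\<omega>. of_bool (P \<omega>) :: real)"
  by (rule integrable_const_bound[where B=1]) (use assms in auto)

lemma expectation_of_bool:
  assumes "Measurable.pred M P"
  shows "expectation (\<lambda>\<omega>. of_bool (P \<omega>)) = prob {\<omega>\<in>space M. P \<omega>}"
proof -
  have "expectation (\<lambda>\<omega>. of_bool (P \<omega>)) = expectation (indicator {\<omega>\<in>space M. P \<omega>})"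
    by (intro Bochner_Integration.integral_cong) (auto simp: indicator_def)
  also have "\<dots> = prob {\<omega>\<in>space M. P \<omega>}" using assms by (simp add: Int_absorb2)
  finally show ?thesis .
qed

lemma integrable_sum_of_bool:
  assumes "\<And>k. k \<in> I \<Longrightarrow> Measurable.pred M (Q k)"
  shows "integrable M (\<lambda>\<omega>. \<Sum>k\<in>I. c k * of_bool (Q k \<omega>) :: real)"
  by (intro Bochner_Integration.integrable_sum integrable_mult_right integrable_of_bool) (use assms in auto)

lemma expectation_sum_of_bool:
  assumes "finite I" "\<And>k. k \<in> I \<Longrightarrow> Measurable.pred M (Q k)"
  shows "expectation (\<lambda>\<omega>. \<Sum>k\<in>I. c k * of_bool (Q k \<omega>)) = (\<Sum>k\<in>I. c k * prob {\<omega>\<in>space M. Q k \<omega>})"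
proof -
  have "expectation (\<lambda>\<omega>. \<Sum>k\<in>I. c k * of_bool (Q k \<omega>)) = (\<Sum>k\<in>I. expectation (\<lambda>\<omega>. c k * of_bool (Q k \<omega>)))"
    by (intro Bochner_Integration.integral_sum integrable_mult_right integrable_of_bool) (use assms in auto)
  also have "\<dots> = (\<Sum>k\<in>I. c k * prob {\<omega>\<in>space M. Q k \<omega>})"
    using assms by (intro sum.cong refl) (simp add: expectation_of_bool)
  finally show ?thesis .
qed

lemma step_approx_measurable[measurable]:
  assumes "\<And>x. Measurable.pred M (\<lambda>\<omega>. R (X \<omega>) x)"
  shows "(\<lambda>\<omega>. step_approx g R s n (X \<omega>)) \<in> borel_measurable M"
  unfolding step_approx_def using assms by measurable

lemma expectation_step_approx:
  assumes "\<And>x. Measurable.pred M (\<lambda>\<omega>. R (X \<omega>) x)"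
  shows "expectation (\<lambda>\<omega>. step_approx g R s n (X \<omega>))
    = (\<Sum>k<n. (g (real (Suc k) * (s / n)) - g (real k * (s / n))) * prob {\<omega>\<in>space M. R (X \<omega>) (real k * (s / n))})"
  unfolding step_approx_def by (intro expectation_sum_of_bool) (use assms in auto)

lemma covariance_step_approx:
  fixes s :: real and n :: nat
  assumes "\<And>x. Measurable.pred M (\<lambda>\<omega>. R (X \<omega>) x)" "\<And>x. Measurable.pred M (\<lambda>\<omega>. R (Y \<omega>) x)"
  defines "a \<equiv> \<lambda>g k. g (real (Suc k) * (s / n)) - g (real k * (s / n))"
  shows "covariance M (\<lambda>\<omega>. step_approx g R s n (X \<omega>)) (\<lambda>\<omega>. step_approx h R s n (Y \<omega>))
     = (\<Sum>k<n. \<Sum>l<n. a g k * a h l *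
         (prob {\<omega>\<in>space M. R (X \<omega>) (real k * (s / n)) \<and> R (Y \<omega>) (real l * (s / n))}
          - prob {\<omega>\<in>space M. R (X \<omega>) (real k * (s / n))} * prob {\<omega>\<in>space M. R (Y \<omega>) (real l * (s / n))}))"
proof -
  have [measurable]: "Measurable.pred M (\<lambda>\<omega>. R (X \<omega>) x)" "Measurable.pred M (\<lambda>\<omega>. R (Y \<omega>) x)" for x
    using assms by simp_all
  have prod: "step_approx g R s n (X \<omega>) * step_approx h R s n (Y \<omega>)
      = (\<Sum>k<n. \<Sum>l<n. a g k * a h l * of_bool (R (X \<omega>) (real k * (s / n)) \<and> R (Y \<omega>) (real l * (s / n))))" for \<omega>
    unfolding step_approx_def a_def sum_product by (intro sum.cong refl) auto
  have "expectation (\<lambda>\<omega>. step_approx g R s n (X \<omega>) * step_approx h R s n (Y \<omega>))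
      = (\<Sum>k<n. expectation (\<lambda>\<omega>. \<Sum>l<n. a g k * a h l *
            of_bool (R (X \<omega>) (real k * (s / n)) \<and> R (Y \<omega>) (real l * (s / n)))))"
    unfolding prod by (intro Bochner_Integration.integral_sum integrable_sum_of_bool) measurable
  also have "\<dots> = (\<Sum>k<n. \<Sum>l<n. a g k * a h l *
      prob {\<omega>\<in>space M. R (X \<omega>) (real k * (s / n)) \<and> R (Y \<omega>) (real l * (s / n))})"
    by (intro sum.cong refl expectation_sum_of_bool) auto
  finally show ?thesis
    unfolding covariance_def expectation_step_approx[OF assms(1)] expectation_step_approx[OF assms(2)]
      a_def sum_product
    by (simp add: sum_subtractf[symmetric] algebra_simps)
qed

lemma tendsto_covariance:
  fixes X Y :: "'a \<Rightarrow> real" and Xn Yn :: "nat \<Rightarrow> 'a \<Rightarrow> real"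
  assumes [measurable]: "\<And>n. Xn n \<in> borel_measurable M" "\<And>n. Yn n \<in> borel_measurable M"
    "X \<in> borel_measurable M" "Y \<in> borel_measurable M"
    and bounded: "\<And>n \<omega>. \<omega> \<in> space M \<Longrightarrow> \<bar>Xn n \<omega>\<bar> \<le> B" "\<And>n \<omega>. \<omega> \<in> space M \<Longrightarrow> \<bar>Yn n \<omega>\<bar> \<le> B"
    and lim: "\<And>\<omega>. \<omega> \<in> space M \<Longrightarrow> (\<lambda>n. Xn n \<omega>) \<longlonglongrightarrow> X \<omega>"
      "\<And>\<omega>. \<omega> \<in> space M \<Longrightarrow> (\<lambda>n. Yn n \<omega>) \<longlonglongrightarrow> Y \<omega>"
  shows "(\<lambda>n. covariance M (Xn n) (Yn n)) \<longlonglongrightarrow> covariance M X Y"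
proof -
  have "(\<lambda>n. expectation (Xn n)) \<longlonglongrightarrow> expectation X" "(\<lambda>n. expectation (Yn n)) \<longlonglongrightarrow> expectation Y"
    by (rule integral_dominated_convergence[where w="\<lambda>_. B"]; use bounded lim in force)+
  moreover have "(\<lambda>n. expectation (\<lambda>\<omega>. Xn n \<omega> * Yn n \<omega>)) \<longlonglongrightarrow> expectation (\<lambda>\<omega>. X \<omega> * Y \<omega>)"
  proof (rule integral_dominated_convergence[where w="\<lambda>_. B * B"])
    show "AE \<omega> in M. (\<lambda>n. Xn n \<omega> * Yn n \<omega>) \<longlonglongrightarrow> X \<omega> * Y \<omega>"
      using lim by (auto intro!: tendsto_mult)
    show "AE \<omega> in M. norm (Xn n \<omega> * Yn n \<omega>) \<le> B * B" for n
    proof (rule AE_I2)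
      fix \<omega> assume "\<omega> \<in> space M"
      then have "\<bar>Xn n \<omega>\<bar> \<le> B" "\<bar>Yn n \<omega>\<bar> \<le> B" using bounded by auto
      then show "norm (Xn n \<omega> * Yn n \<omega>) \<le> B * B"
        by (auto simp: abs_mult intro!: mult_mono intro: order_trans[OF abs_ge_zero])
    qed
  qed auto
  ultimately show ?thesis unfolding covariance_def by (intro tendsto_intros)
qed

lemma tendsto_covariance_step_approx:
  assumes [measurable]: "X \<in> borel_measurable M" "Y \<in> borel_measurable M"
    and nonneg: "\<And>\<omega>. \<omega> \<in> space M \<Longrightarrow> 0 \<le> X \<omega>" "\<And>\<omega>. \<omega> \<in> space M \<Longrightarrow> 0 \<le> Y \<omega>"
    and g: "mono_on {0..} g" "continuous_on UNIV g" "g 0 = 0"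
    and R: "exceedance R" and [measurable]: "\<And>x. Measurable.pred M (\<lambda>\<omega>. R (X \<omega>) x)"
      "\<And>x. Measurable.pred M (\<lambda>\<omega>. R (Y \<omega>) x)"
    and "0 < s"
  shows "(\<lambda>n. covariance M (\<lambda>\<omega>. step_approx g R s n (X \<omega>)) (\<lambda>\<omega>. step_approx g R s n (Y \<omega>)))
    \<longlonglongrightarrow> covariance M (\<lambda>\<omega>. g (min (X \<omega>) s)) (\<lambda>\<omega>. g (min (Y \<omega>) s))"
proof (rule tendsto_covariance[where B="g s - g 0"])
  have [measurable]: "g \<in> borel_measurable borel" using g(2) by (rule borel_measurable_continuous_onI)
  show "(\<lambda>\<omega>. g (min (X \<omega>) s)) \<in> borel_measurable M" "(\<lambda>\<omega>. g (min (Y \<omega>) s)) \<in> borel_measurable M"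
    by measurable
qed (use nonneg step_approx_abs_le[OF g(1) R] tendsto_step_approx[OF g(1,2) R] g(3) \<open>0 < s\<close> in auto)

(* Under PQD_tails all coefficients of the expansion covariance_step_approx are nonnegative,
   and on the grid the increments of x^2 are at most 2 s times those of x. *)
lemma PQD_tails_covariance_step_approx:
  assumes pX: "\<And>x. Measurable.pred M (\<lambda>\<omega>. R (X \<omega>) x)" and pY: "\<And>x. Measurable.pred M (\<lambda>\<omega>. R (Y \<omega>) x)"
    and pqd: "PQD_tails M R X Y" and "0 < s"
  shows covariance_step_approx_nonneg:
      "0 \<le> covariance M (\<lambda>\<omega>. step_approx (\<lambda>x. x) R s n (X \<omega>)) (\<lambda>\<omega>. step_approx (\<lambda>x. x) R s n (Y \<omega>))"
    and covariance_step_approx_sq_le: "0 < n \<Longrightarrow>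
      covariance M (\<lambda>\<omega>. step_approx power2 R s n (X \<omega>)) (\<lambda>\<omega>. step_approx power2 R s n (Y \<omega>))
      \<le> 4 * s\<^sup>2 * covariance M (\<lambda>\<omega>. step_approx (\<lambda>x. x) R s n (X \<omega>)) (\<lambda>\<omega>. step_approx (\<lambda>x. x) R s n (Y \<omega>))"
proof -
  define D where "D k l =
    prob {\<omega>\<in>space M. R (X \<omega>) (real k * (s / n)) \<and> R (Y \<omega>) (real l * (s / n))}
    - prob {\<omega>\<in>space M. R (X \<omega>) (real k * (s / n))} * prob {\<omega>\<in>space M. R (Y \<omega>) (real l * (s / n))}"
    for k l :: nat
  have D_nonneg: "0 \<le> D k l" for k l
    using pqd \<open>0 < s\<close> unfolding D_def PQD_tails_def by simp
  have "real (Suc k) * h - real k * h = h" for k and h :: real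
    by (simp add: algebra_simps)
  then have L: "covariance M (\<lambda>\<omega>. step_approx (\<lambda>x. x) R s n (X \<omega>)) (\<lambda>\<omega>. step_approx (\<lambda>x. x) R s n (Y \<omega>))
      = (\<Sum>k<n. \<Sum>l<n. (s / n) * (s / n) * D k l)"
    unfolding covariance_step_approx[OF pX pY] D_def by (simp only:)
  then show "0 \<le> covariance M (\<lambda>\<omega>. step_approx (\<lambda>x. x) R s n (X \<omega>)) (\<lambda>\<omega>. step_approx (\<lambda>x. x) R s n (Y \<omega>))"
    using D_nonneg by (simp add: sum_nonneg)
  assume "0 < n"
  have "(real (Suc k) * h)\<^sup>2 - (real k * h)\<^sup>2 = (2 * real k + 1) * h\<^sup>2" for k and h :: real
    by (simp add: power2_eq_square algebra_simps)
  then have "covariance M (\<lambda>\<omega>. step_approx power2 R s n (X \<omega>)) (\<lambda>\<omega>. step_approx power2 R s n (Y \<omega>))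
      = (\<Sum>k<n. \<Sum>l<n. ((2 * real k + 1) * (s / n)\<^sup>2) * ((2 * real l + 1) * (s / n)\<^sup>2) * D k l)"
    unfolding covariance_step_approx[OF pX pY] D_def by (simp only:)
  also have "\<dots> \<le> (\<Sum>k<n. \<Sum>l<n. (2 * s * (s / n)) * (2 * s * (s / n)) * D k l)"
  proof -
    have "0 \<le> (2 * real k + 1) * (s / n)\<^sup>2 \<and> (2 * real k + 1) * (s / n)\<^sup>2 \<le> 2 * s * (s / n)" if "k < n" for k
    proof -
      have "(2 * real k + 1) * (s / n) \<le> 2 * real n * (s / n)"
        using that \<open>0 < s\<close> by (intro mult_right_mono) auto
      then have "(2 * real k + 1) * (s / n) * (s / n) \<le> 2 * s * (s / n)"
        using \<open>0 < n\<close> \<open>0 < s\<close> by (intro mult_right_mono) auto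
      then show ?thesis using \<open>0 < s\<close> by (simp add: power2_eq_square mult.assoc)
    qed
    then show ?thesis by (intro sum_mono mult_right_mono[OF mult_mono] D_nonneg) auto
  qed
  also have "\<dots> = 4 * s\<^sup>2 * covariance M (\<lambda>\<omega>. step_approx (\<lambda>x. x) R s n (X \<omega>)) (\<lambda>\<omega>. step_approx (\<lambda>x. x) R s n (Y \<omega>))"
    unfolding L sum_distrib_left by (simp add: power2_eq_square algebra_simps)
  finally show "covariance M (\<lambda>\<omega>. step_approx power2 R s n (X \<omega>)) (\<lambda>\<omega>. step_approx power2 R s n (Y \<omega>))
      \<le> 4 * s\<^sup>2 * covariance M (\<lambda>\<omega>. step_approx (\<lambda>x. x) R s n (X \<omega>)) (\<lambda>\<omega>. step_approx (\<lambda>x. x) R s n (Y \<omega>))" .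
qed

lemma PQD_tails_G_cov:
  assumes [measurable]: "X \<in> borel_measurable M" "Y \<in> borel_measurable M"
    and nonneg: "\<And>\<omega>. \<omega> \<in> space M \<Longrightarrow> 0 \<le> X \<omega>" "\<And>\<omega>. \<omega> \<in> space M \<Longrightarrow> 0 \<le> Y \<omega>"
    and R: "exceedance R" and pX[measurable]: "\<And>x. Measurable.pred M (\<lambda>\<omega>. R (X \<omega>) x)"
    and pY[measurable]: "\<And>x. Measurable.pred M (\<lambda>\<omega>. R (Y \<omega>) x)"
    and pqd: "PQD_tails M R X Y" and "0 < s"
  shows G_cov_nonneg: "0 \<le> G_cov M X Y s"
    and covariance_trunc_sq_le: "covariance M (\<lambda>\<omega>. (min (X \<omega>) s)\<^sup>2) (\<lambda>\<omega>. (min (Y \<omega>) s)\<^sup>2) \<le> 4 * s\<^sup>2 * G_cov M X Y s"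
proof -
  define L where "L n = covariance M (\<lambda>\<omega>. step_approx (\<lambda>x. x) R s n (X \<omega>)) (\<lambda>\<omega>. step_approx (\<lambda>x. x) R s n (Y \<omega>))" for n
  define Q where "Q n = covariance M (\<lambda>\<omega>. step_approx power2 R s n (X \<omega>)) (\<lambda>\<omega>. step_approx power2 R s n (Y \<omega>))" for n
  have G_eq: "G_cov M X Y s = covariance M (\<lambda>\<omega>. min (X \<omega>) s) (\<lambda>\<omega>. min (Y \<omega>) s)"
    using nonneg \<open>0 < s\<close> by (intro G_cov_eq_covariance_min) auto
  have lim_L: "L \<longlonglongrightarrow> G_cov M X Y s"
    unfolding L_def G_eq using tendsto_covariance_step_approx[of X Y "\<lambda>x. x" R s] assms
    by (simp add: mono_on_def continuous_on_id)
  have lim_Q: "Q \<longlonglongrightarrow> covariance M (\<lambda>\<omega>. (min (X \<omega>) s)\<^sup>2) (\<lambda>\<omega>. (min (Y \<omega>) s)\<^sup>2)"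
    unfolding Q_def using tendsto_covariance_step_approx[of X Y power2 R s] assms
    by (simp add: mono_on_def power_mono continuous_intros)
  show "0 \<le> G_cov M X Y s"
    using covariance_step_approx_nonneg[OF pX pY pqd \<open>0 < s\<close>]
    by (intro LIMSEQ_le_const[OF lim_L]) (auto simp: L_def)
  show "covariance M (\<lambda>\<omega>. (min (X \<omega>) s)\<^sup>2) (\<lambda>\<omega>. (min (Y \<omega>) s)\<^sup>2) \<le> 4 * s\<^sup>2 * G_cov M X Y s"
    using covariance_step_approx_sq_le[OF pX pY pqd \<open>0 < s\<close>]
    by (intro LIMSEQ_le[OF lim_Q tendsto_mult[OF tendsto_const lim_L]]) (auto simp: L_def Q_def intro!: exI[of _ 1])
qed

lemma tendsto_expectation_step_approx:
  assumes [measurable]: "X \<in> borel_measurable M" and nonneg: "\<And>\<omega>. \<omega> \<in> space M \<Longrightarrow> 0 \<le> X \<omega>"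
    and g: "mono_on {0..} g" "continuous_on UNIV g" and R: "exceedance R"
    and [measurable]: "\<And>x. Measurable.pred M (\<lambda>\<omega>. R (X \<omega>) x)" and "0 < s"
  shows "(\<lambda>n. expectation (\<lambda>\<omega>. step_approx g R s n (X \<omega>))) \<longlonglongrightarrow> expectation (\<lambda>\<omega>. g (min (X \<omega>) s) - g 0)"
proof (rule integral_dominated_convergence[where w="\<lambda>_. g s - g 0"])
  have [measurable]: "g \<in> borel_measurable borel" using g(2) by (rule borel_measurable_continuous_onI)
  show "(\<lambda>\<omega>. g (min (X \<omega>) s) - g 0) \<in> borel_measurable M" by measurable
qed (use nonneg step_approx_abs_le[OF g(1) R \<open>0 < s\<close>] tendsto_step_approx[OF g R \<open>0 < s\<close>] in auto)

(* Domination compares the exceedance probabilities at every level except 0, which costs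
   only the first increment g (s / n) - g 0. *)
lemma expectation_step_approx_le_dominated:
  fixes W Z :: "'a \<Rightarrow> real"
  assumes [measurable]: "W \<in> borel_measurable M" "Z \<in> borel_measurable M" and "0 \<le> C"
    and dom: "\<And>x. 0 < x \<Longrightarrow> prob {\<omega>\<in>space M. x < W \<omega>} \<le> C * prob {\<omega>\<in>space M. x < \<bar>Z \<omega>\<bar>}"
    and g: "mono_on {0..} g" and "0 < s" "0 < n"
  shows "expectation (\<lambda>\<omega>. step_approx g (\<lambda>u x. x < u) s n (W \<omega>))
    \<le> g (s / n) - g 0 + C * expectation (\<lambda>\<omega>. step_approx g (\<lambda>u x. x < u) s n \<bar>Z \<omega>\<bar>)"
proof -
  define a where "a k = g (real (Suc k) * (s / n)) - g (real k * (s / n))" for k :: nat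
  define p where "p U k = prob {\<omega>\<in>space M. real k * (s / n) < U \<omega>}" for U and k :: nat
  have a_nonneg: "0 \<le> a k" for k
  proof -
    have "real k * (s / n) \<le> real (Suc k) * (s / n)" using \<open>0 < s\<close> by (intro mult_right_mono) auto
    then show ?thesis unfolding a_def using \<open>0 < s\<close> by (auto intro!: mono_onD[OF g])
  qed
  have "a k * p W k \<le> a k * of_bool (k = 0) + C * (a k * p (\<lambda>\<omega>. \<bar>Z \<omega>\<bar>) k)" for k
  proof (cases "k = 0")
    case True
    have "a k * p W k \<le> a k" using a_nonneg[of k] by (simp add: p_def mult_left_le)
    moreover have "0 \<le> C * (a k * p (\<lambda>\<omega>. \<bar>Z \<omega>\<bar>) k)" using a_nonneg[of k] \<open>0 \<le> C\<close> by (simp add: p_def)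
    ultimately show ?thesis using True by simp
  next
    case False
    then have "p W k \<le> C * p (\<lambda>\<omega>. \<bar>Z \<omega>\<bar>) k"
      unfolding p_def using \<open>0 < s\<close> \<open>0 < n\<close> by (intro dom) simp
    then have "a k * p W k \<le> a k * (C * p (\<lambda>\<omega>. \<bar>Z \<omega>\<bar>) k)"
      using a_nonneg[of k] by (rule mult_left_mono)
    then show ?thesis using False by (simp add: mult.left_commute)
  qed
  then have "(\<Sum>k<n. a k * p W k) \<le> (\<Sum>k<n. a k * of_bool (k = 0) + C * (a k * p (\<lambda>\<omega>. \<bar>Z \<omega>\<bar>) k))"
    by (rule sum_mono)
  also have "\<dots> = a 0 + C * (\<Sum>k<n. a k * p (\<lambda>\<omega>. \<bar>Z \<omega>\<bar>) k)"
    using \<open>0 < n\<close> by (simp add: sum.distrib sum_distrib_left)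
  finally show ?thesis
    by (simp add: expectation_step_approx a_def p_def)
qed

lemma expectation_trunc_le_dominated:
  fixes W Z :: "'a \<Rightarrow> real"
  assumes [measurable]: "W \<in> borel_measurable M" "Z \<in> borel_measurable M"
    and nonneg: "\<And>\<omega>. \<omega> \<in> space M \<Longrightarrow> 0 \<le> W \<omega>" and "0 \<le> C"
    and dom: "\<And>x. 0 < x \<Longrightarrow> prob {\<omega>\<in>space M. x < W \<omega>} \<le> C * prob {\<omega>\<in>space M. x < \<bar>Z \<omega>\<bar>}"
    and g: "mono_on {0..} g" "continuous_on UNIV g" "g 0 = 0" and "0 < s"
  shows "expectation (\<lambda>\<omega>. g (min (W \<omega>) s)) \<le> C * expectation (\<lambda>\<omega>. g (min \<bar>Z \<omega>\<bar> s))"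
proof -
  let ?E = "\<lambda>U n. expectation (\<lambda>\<omega>. step_approx g (\<lambda>u x. x < u) s n (U \<omega>))"
  have "?E W \<longlonglongrightarrow> expectation (\<lambda>\<omega>. g (min (W \<omega>) s))"
    using tendsto_expectation_step_approx[OF _ nonneg g(1,2) exceedance_strict] g(3) \<open>0 < s\<close> by simp
  moreover have "(\<lambda>n. g (s / real n) - g 0 + C * ?E (\<lambda>\<omega>. \<bar>Z \<omega>\<bar>) n)
      \<longlonglongrightarrow> g 0 - g 0 + C * expectation (\<lambda>\<omega>. g (min \<bar>Z \<omega>\<bar> s))"
    using tendsto_expectation_step_approx[OF _ _ g(1,2) exceedance_strict, of "\<lambda>\<omega>. \<bar>Z \<omega>\<bar>"] g \<open>0 < s\<close>
    by (intro tendsto_intros continuous_on_tendsto_compose[of UNIV g] lim_const_over_n) auto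
  ultimately show ?thesis
    using expectation_step_approx_le_dominated[OF _ _ \<open>0 \<le> C\<close> dom g(1) \<open>0 < s\<close>] g(3)
    by (intro LIMSEQ_le) (auto intro!: exI[of _ 1])
qed

end

section \<open>Dyadic decompositions\<close>

lemma sum_pow2_less_le:
  fixes z :: real
  assumes "0 \<le> z"
  shows "(\<Sum>m<N. 2 ^ m * of_bool (2 ^ m < z)) \<le> min (2 * z) (2 ^ N)"
proof (induction N)
  case 0
  then show ?case using assms by simp
next
  case (Suc N)
  have "S + 2 ^ N * of_bool (2 ^ N < z) \<le> min (2 * z) (2 ^ Suc N)" if "S \<le> min (2 * z) (2 ^ N)" for S
    using that by (cases "2 ^ N < z") (auto simp: min_def split: if_splits)
  from this[OF Suc.IH] show ?case by (simp only: sum.lessThan_Suc)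
qed

lemma min_pow2_sq_step:
  fixes z c S :: real
  assumes "0 \<le> z" "0 < c" and S: "S \<le> (if c \<le> z then 4 * c else 8 * z - 2 * z\<^sup>2 / c)"
  shows "S + (min z (2 * c))\<^sup>2 / c \<le> (if 2 * c \<le> z then 4 * (2 * c) else 8 * z - 2 * z\<^sup>2 / (2 * c))"
proof -
  consider "2 * c \<le> z" | "c \<le> z" "z < 2 * c" | "z < c" by linarith
  then show ?thesis
  proof cases
    case 1
    then show ?thesis using S \<open>0 < c\<close> by (simp add: power2_eq_square)
  next
    case 2
    have "(z - c) * (z - 2 * c) \<le> 0" using 2 by (intro mult_nonneg_nonpos) auto
    moreover have "0 \<le> z * c" using assms by simp
    ultimately have "c * (2 * z\<^sup>2 + 4 * c\<^sup>2) \<le> c * (8 * z * c)"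
      using \<open>0 < c\<close> by (intro mult_left_mono) (auto simp: power2_eq_square algebra_simps)
    then have "4 * c + z\<^sup>2 / c \<le> 8 * z - z\<^sup>2 / c"
      using \<open>0 < c\<close> by (simp add: field_simps power2_eq_square)
    then show ?thesis using S 2 by (simp add: min_def)
  next
    case 3
    moreover have "2 * z\<^sup>2 / (2 * c) = z\<^sup>2 / c" by simp
    ultimately show ?thesis using S \<open>0 < c\<close> by (simp add: min_def)
  qed
qed

lemma sum_min_pow2_sq_le:
  fixes z :: real
  assumes "0 \<le> z"
  shows "(\<Sum>m<N. (min z (2 ^ (m + 1)))\<^sup>2 / 2 ^ m) \<le> 8 * z"
proof -
  have "(\<Sum>m<N. (min z (2 ^ (m + 1)))\<^sup>2 / 2 ^ m) \<le> (if 2 ^ N \<le> z then 4 * 2 ^ N else 8 * z - 2 * z\<^sup>2 / 2 ^ N)"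
  proof (induction N)
    case 0
    have "z * z \<le> 4 * z" if "z < 1" using mult_left_le[of z z] that assms by linarith
    then show ?case by (auto simp: power2_eq_square)
  next
    case (Suc N)
    have sum_eq: "(\<Sum>m<Suc N. (min z (2 ^ (m + 1)))\<^sup>2 / 2 ^ m)
        = (\<Sum>m<N. (min z (2 ^ (m + 1)))\<^sup>2 / 2 ^ m) + (min z (2 * 2 ^ N))\<^sup>2 / 2 ^ N"
      by simp
    have pow_eq: "(2::real) ^ Suc N = 2 * 2 ^ N" by simp
    show ?case unfolding sum_eq pow_eq by (rule min_pow2_sq_step[OF assms _ Suc.IH]) simp
  qed
  also have "\<dots> \<le> 8 * z" using assms by (auto simp: field_simps)
  finally show ?thesis .
qed

lemma double_sum_symmetric:
  fixes b :: "nat \<Rightarrow> nat \<Rightarrow> real"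
  assumes "\<And>k j. b k j = b j k"
  shows "(\<Sum>k\<in>{1..N}. \<Sum>j\<in>{1..N}. b k j) = (\<Sum>j\<in>{1..N}. b j j) + 2 * (\<Sum>j\<in>{1..N}. \<Sum>k\<in>{1..<j}. b k j)"
proof (induction N)
  case (Suc N)
  have "{1..<Suc N} = {1..N}" by auto
  moreover have "(\<Sum>j\<in>{1..N}. b (Suc N) j) = (\<Sum>k\<in>{1..N}. b k (Suc N))" using assms by simp
  ultimately show ?case
    using Suc by (simp add: sum.distrib sum.cl_ivl_Suc)
qed simp

lemma linear_bound_from_dyadic:
  fixes a :: "nat \<Rightarrow> real"
  assumes nonneg: "\<And>i. 0 \<le> a i" and "0 \<le> K"
    and dyadic: "\<forall>\<^sub>F m in sequentially. (\<Sum>i\<in>{1..2 ^ m}. a i) \<le> K * 2 ^ m"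
  shows "\<forall>\<^sub>F n in sequentially. (\<Sum>i\<in>{1..n}. a i) \<le> 2 * K * real n"
proof -
  obtain m0 where m0: "\<And>m. m0 \<le> m \<Longrightarrow> (\<Sum>i\<in>{1..2 ^ m}. a i) \<le> K * 2 ^ m"
    using dyadic unfolding eventually_sequentially by blast
  have "(\<Sum>i\<in>{1..n}. a i) \<le> 2 * K * real n" if "2 ^ m0 \<le> n" for n
  proof -
    have "(1::nat) \<le> 2 ^ m0" by simp
    with that have "1 \<le> n" by linarith
    then obtain m where m: "2 ^ m \<le> n" "n < 2 ^ (m + 1)" using ex_power_ivl1[of 2 n] by auto
    have "2 ^ m0 < (2::nat) ^ (m + 1)" using that m by linarith
    then have "m0 \<le> m + 1" using power_strict_increasing_iff[of "2::nat" m0 "m + 1"] by simp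
    have "(2::real) ^ m \<le> real n" using m(1) by (metis of_nat_le_iff of_nat_numeral of_nat_power)
    have "(\<Sum>i\<in>{1..n}. a i) \<le> (\<Sum>i\<in>{1..2 ^ (m + 1)}. a i)"
      using m nonneg by (intro sum_mono2) auto
    also have "\<dots> \<le> 2 * K * 2 ^ m" using m0[OF \<open>m0 \<le> m + 1\<close>] by simp
    also have "\<dots> \<le> 2 * K * real n"
      using \<open>2 ^ m \<le> real n\<close> \<open>0 \<le> K\<close> by (intro mult_left_mono) auto
    finally show ?thesis .
  qed
  then show ?thesis unfolding eventually_sequentially by blast
qed

lemma suminf_ennreal_swap:
  fixes f :: "nat \<Rightarrow> nat \<Rightarrow> ennreal"
  shows "(\<Sum>m. \<Sum>j. f m j) = (\<Sum>j. \<Sum>m. f m j)"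
proof -
  have "(\<Sum>m. \<Sum>j. f m j) = (\<Sum>m. \<integral>\<^sup>+j. f m j \<partial>count_space UNIV)"
    by (simp add: nn_integral_count_space_nat)
  also have "\<dots> = (\<integral>\<^sup>+j. (\<Sum>m. f m j) \<partial>count_space UNIV)"
    by (rule nn_integral_suminf[symmetric]) simp
  also have "\<dots> = (\<Sum>j. \<Sum>m. f m j)"
    by (simp add: nn_integral_count_space_nat)
  finally show ?thesis .
qed

definition dyadic_ivl :: "nat \<Rightarrow> real set" where
  "dyadic_ivl m = {2 ^ m ..< 2 ^ (m + 1)}"

lemma disjoint_family_dyadic_ivl: "disjoint_family dyadic_ivl"
proof -
  have "dyadic_ivl m \<inter> dyadic_ivl m' = {}" if "m < m'" for m m'
  proof -
    have "(2::real) ^ (m + 1) \<le> 2 ^ m'" using that by (intro power_increasing) auto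
    then show ?thesis unfolding dyadic_ivl_def by auto
  qed
  then show ?thesis
    unfolding disjoint_family_on_def by (metis Int_commute linorder_neqE_nat)
qed

lemma suminf_dyadic_blocks_le:
  fixes H :: "nat \<Rightarrow> real \<Rightarrow> ennreal"
  assumes [measurable]: "\<And>j. H j \<in> borel_measurable borel"
  shows "(\<Sum>m. \<Sum>j\<in>{1..2 ^ m}. \<integral>\<^sup>+t. indicator (dyadic_ivl m) t * H j t \<partial>lborel)
    \<le> (\<Sum>j. \<integral>\<^sup>+t. indicator {real j..} t * H j t \<partial>lborel)"
proof -
  define A where "A m j = (if 1 \<le> j \<and> j \<le> (2::nat) ^ m then dyadic_ivl m else {})" for m j
  have [measurable]: "A m j \<in> sets borel" for m j unfolding A_def dyadic_ivl_def by auto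
  have "(\<Sum>j\<in>{1..2 ^ m}. \<integral>\<^sup>+t. indicator (dyadic_ivl m) t * H j t \<partial>lborel)
      = (\<Sum>j. \<integral>\<^sup>+t. indicator (A m j) t * H j t \<partial>lborel)" for m
  proof -
    have "(\<Sum>j. \<integral>\<^sup>+t. indicator (A m j) t * H j t \<partial>lborel)
        = (\<Sum>j\<in>{1..2 ^ m}. \<integral>\<^sup>+t. indicator (A m j) t * H j t \<partial>lborel)"
      by (rule suminf_finite) (auto simp: A_def)
    then show ?thesis by (simp add: A_def)
  qed
  then have "(\<Sum>m. \<Sum>j\<in>{1..2 ^ m}. \<integral>\<^sup>+t. indicator (dyadic_ivl m) t * H j t \<partial>lborel)
      = (\<Sum>m. \<Sum>j. \<integral>\<^sup>+t. indicator (A m j) t * H j t \<partial>lborel)"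
    by simp
  also have "\<dots> = (\<Sum>j. \<Sum>m. \<integral>\<^sup>+t. indicator (A m j) t * H j t \<partial>lborel)"
    by (rule suminf_ennreal_swap)
  also have "\<dots> \<le> (\<Sum>j. \<integral>\<^sup>+t. indicator {real j..} t * H j t \<partial>lborel)"
  proof (intro suminf_le summableI)
    fix j
    have "disjoint_family (\<lambda>m. A m j)"
      using disjoint_family_dyadic_ivl unfolding disjoint_family_on_def A_def by auto
    then have "(\<Sum>m. \<integral>\<^sup>+t. indicator (A m j) t * H j t \<partial>lborel) = (\<integral>\<^sup>+t. indicator (\<Union>m. A m j) t * H j t \<partial>lborel)"
      by (subst nn_integral_suminf[symmetric]) (auto simp: suminf_indicator)
    also have "\<dots> \<le> (\<integral>\<^sup>+t. indicator {real j..} t * H j t \<partial>lborel)"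
    proof (intro nn_integral_mono mult_right_mono)
      have "real j \<le> t" if "t \<in> A m j" for m t
      proof -
        have "j \<le> 2 ^ m" "2 ^ m \<le> t" using that unfolding A_def dyadic_ivl_def by (auto split: if_splits)
        then have "real j \<le> 2 ^ m" "2 ^ m \<le> t" by (metis of_nat_le_iff of_nat_numeral of_nat_power)+
        then show ?thesis by linarith
      qed
      then show "indicator (\<Union>m. A m j) t \<le> (indicator {real j..} t :: ennreal)" for t
        by (auto simp: indicator_def)
    qed simp
    finally show "(\<Sum>m. \<integral>\<^sup>+t. indicator (A m j) t * H j t \<partial>lborel) \<le> (\<integral>\<^sup>+t. indicator {real j..} t * H j t \<partial>lborel)" .
  qed
  finally show ?thesis .
qed

context prob_space
begin

lemma suminf_expectation_le:
  fixes f :: "nat \<Rightarrow> 'a \<Rightarrow> real"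
  assumes [measurable]: "\<And>m. f m \<in> borel_measurable M"
    and integrable: "\<And>m. integrable M (f m)" "integrable M Y"
    and nonneg: "\<And>m \<omega>. \<omega> \<in> space M \<Longrightarrow> 0 \<le> f m \<omega>"
    and partial_sums: "\<And>N \<omega>. \<omega> \<in> space M \<Longrightarrow> (\<Sum>m<N. f m \<omega>) \<le> Y \<omega>"
  shows "(\<Sum>m. ennreal (expectation (f m))) \<le> ennreal (expectation Y)"
proof -
  have "(\<Sum>m. ennreal (expectation (f m))) = (\<Sum>m. \<integral>\<^sup>+\<omega>. ennreal (f m \<omega>) \<partial>M)"
    using integrable nonneg by (simp add: nn_integral_eq_integral)
  also have "\<dots> = (\<integral>\<^sup>+\<omega>. (\<Sum>m. ennreal (f m \<omega>)) \<partial>M)"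
    by (rule nn_integral_suminf[symmetric]) measurable
  also have "\<dots> \<le> (\<integral>\<^sup>+\<omega>. ennreal (Y \<omega>) \<partial>M)"
  proof (intro nn_integral_mono suminf_le_const summableI)
    fix N \<omega> assume "\<omega> \<in> space M"
    then show "(\<Sum>m<N. ennreal (f m \<omega>)) \<le> ennreal (Y \<omega>)"
      using nonneg partial_sums by (simp add: ennreal_leI)
  qed
  also have "\<dots> = ennreal (expectation Y)"
    using partial_sums[of _ 0] by (intro nn_integral_eq_integral integrable) auto
  finally show ?thesis .
qed

lemma suminf_pow2_tail_le:
  assumes [measurable]: "Y \<in> borel_measurable M" and "integrable M Y"
    and nonneg: "\<And>\<omega>. \<omega> \<in> space M \<Longrightarrow> 0 \<le> Y \<omega>"
  shows "(\<Sum>m. ennreal (2 ^ m * prob {\<omega>\<in>space M. 2 ^ m < Y \<omega>})) \<le> ennreal (2 * expectation Y)"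
proof -
  have "(\<Sum>m. ennreal (expectation (\<lambda>\<omega>. 2 ^ m * of_bool (2 ^ m < Y \<omega>))))
      \<le> ennreal (expectation (\<lambda>\<omega>. 2 * Y \<omega>))"
  proof (rule suminf_expectation_le)
    show "integrable M (\<lambda>\<omega>. 2 ^ m * of_bool (2 ^ m < Y \<omega>) :: real)" for m
      by (intro integrable_mult_right integrable_of_bool) measurable
    show "(\<Sum>m<N. 2 ^ m * of_bool (2 ^ m < Y \<omega>)) \<le> 2 * Y \<omega>" if "\<omega> \<in> space M" for N \<omega>
      using sum_pow2_less_le[OF nonneg[OF that], of N] by simp
  qed (use \<open>integrable M Y\<close> in auto)
  then show ?thesis by (simp add: expectation_of_bool)
qed

lemma suminf_trunc_sq_le:
  assumes [measurable]: "Y \<in> borel_measurable M" and "integrable M Y"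
    and nonneg: "\<And>\<omega>. \<omega> \<in> space M \<Longrightarrow> 0 \<le> Y \<omega>"
  shows "(\<Sum>m. ennreal (expectation (\<lambda>\<omega>. (min (Y \<omega>) (2 ^ (m + 1)))\<^sup>2) / 2 ^ m)) \<le> ennreal (8 * expectation Y)"
proof -
  have "(\<Sum>m. ennreal (expectation (\<lambda>\<omega>. (min (Y \<omega>) (2 ^ (m + 1)))\<^sup>2 / 2 ^ m)))
      \<le> ennreal (expectation (\<lambda>\<omega>. 8 * Y \<omega>))"
  proof (rule suminf_expectation_le)
    show "integrable M (\<lambda>\<omega>. (min (Y \<omega>) (2 ^ (m + 1)))\<^sup>2 / 2 ^ m)" for m
    proof (rule integrable_const_bound[where B="(2 ^ (m + 1))\<^sup>2 / 2 ^ m"])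
      show "AE \<omega> in M. norm ((min (Y \<omega>) (2 ^ (m + 1)))\<^sup>2 / 2 ^ m) \<le> (2 ^ (m + 1))\<^sup>2 / (2::real) ^ m"
      proof (rule AE_I2)
        fix \<omega> assume "\<omega> \<in> space M"
        then have "(min (Y \<omega>) (2 ^ (m + 1)))\<^sup>2 \<le> (2 ^ (m + 1))\<^sup>2" using nonneg by (intro power_mono) auto
        then have "(min (Y \<omega>) (2 ^ (m + 1)))\<^sup>2 / 2 ^ m \<le> (2 ^ (m + 1))\<^sup>2 / (2::real) ^ m"
          by (rule divide_right_mono) simp
        then show "norm ((min (Y \<omega>) (2 ^ (m + 1)))\<^sup>2 / 2 ^ m) \<le> (2 ^ (m + 1))\<^sup>2 / (2::real) ^ m"
          by simp
      qed
    qed measurable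
    show "(\<Sum>m<N. (min (Y \<omega>) (2 ^ (m + 1)))\<^sup>2 / 2 ^ m) \<le> 8 * Y \<omega>" if "\<omega> \<in> space M" for N \<omega>
      using sum_min_pow2_sq_le[OF nonneg[OF that]] by simp
  qed (use \<open>integrable M Y\<close> in auto)
  then show ?thesis by simp
qed

lemma variance_sum_eq:
  fixes U :: "nat \<Rightarrow> 'a \<Rightarrow> real"
  assumes "finite I" "\<And>i. i \<in> I \<Longrightarrow> integrable M (U i)"
    and "\<And>i j. i \<in> I \<Longrightarrow> j \<in> I \<Longrightarrow> integrable M (\<lambda>\<omega>. U i \<omega> * U j \<omega>)"
  shows "variance (\<lambda>\<omega>. \<Sum>i\<in>I. U i \<omega>) = (\<Sum>k\<in>I. \<Sum>j\<in>I. covariance M (U k) (U j))"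
proof -
  have square: "(\<Sum>i\<in>I. U i \<omega>)\<^sup>2 = (\<Sum>k\<in>I. \<Sum>j\<in>I. U k \<omega> * U j \<omega>)" for \<omega>
    by (simp add: power2_eq_square sum_product)
  have "variance (\<lambda>\<omega>. \<Sum>i\<in>I. U i \<omega>)
      = expectation (\<lambda>\<omega>. (\<Sum>i\<in>I. U i \<omega>)\<^sup>2) - (expectation (\<lambda>\<omega>. \<Sum>i\<in>I. U i \<omega>))\<^sup>2"
    using assms by (intro variance_eq) (auto simp: square)
  also have "\<dots> = (\<Sum>k\<in>I. \<Sum>j\<in>I. expectation (\<lambda>\<omega>. U k \<omega> * U j \<omega>))
      - (\<Sum>k\<in>I. \<Sum>j\<in>I. expectation (U k) * expectation (U j))"
    using assms by (simp add: square Bochner_Integration.integral_sum power2_eq_square sum_product)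
  finally show ?thesis
    unfolding covariance_def by (simp add: sum_subtractf)
qed

end

section \<open>Sums of squares of a dominated PQD sequence grow linearly\<close>

lemma min_abs_sqrt_sq:
  fixes z t :: real
  assumes "0 \<le> t"
  shows "(min \<bar>z\<bar> (sqrt t))\<^sup>2 = min (z\<^sup>2) t"
proof (cases "\<bar>z\<bar> \<le> sqrt t")
  case True
  have "\<bar>z\<bar>\<^sup>2 \<le> (sqrt t)\<^sup>2" using power_mono[OF True, of 2] by simp
  then show ?thesis using True assms by (simp add: min_def)
next
  case False
  have "(sqrt t)\<^sup>2 < \<bar>z\<bar>\<^sup>2" using power_strict_mono[of "sqrt t" "\<bar>z\<bar>" 2] False assms by simp
  then show ?thesis using False assms by (simp add: min_def)
qed

(* The instances are the positive parts of the errors, with strict exceedance, and their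
   negative parts, with non-strict exceedance. *)
locale PQD_dominated_seq = prob_space +
  fixes W :: "nat \<Rightarrow> 'a \<Rightarrow> real" and Z :: "'a \<Rightarrow> real" and C :: real and R :: "real \<Rightarrow> real \<Rightarrow> bool"
  assumes W_measurable[measurable]: "\<And>i. W i \<in> borel_measurable M"
    and Z_measurable[measurable]: "Z \<in> borel_measurable M"
    and W_nonneg: "\<And>i \<omega>. \<omega> \<in> space M \<Longrightarrow> 0 \<le> W i \<omega>"
    and C_pos: "0 < C"
    and dominated: "\<And>i x. 1 \<le> i \<Longrightarrow> 0 < x \<Longrightarrow> prob {\<omega>\<in>space M. x < W i \<omega>} \<le> C * prob {\<omega>\<in>space M. x < \<bar>Z \<omega>\<bar>}"
    and integrable_Z_sq: "integrable M (\<lambda>\<omega>. (Z \<omega>)\<^sup>2)"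
    and exceedance: "exceedance R"
    and R_measurable[measurable]: "\<And>i x. Measurable.pred M (\<lambda>\<omega>. R (W i \<omega>) x)"
    and PQD: "\<And>k j. 1 \<le> k \<Longrightarrow> 1 \<le> j \<Longrightarrow> k \<noteq> j \<Longrightarrow> PQD_tails M R (W k) (W j)"
begin

lemma G_cov_W_nonneg:
  assumes "1 \<le> k" "1 \<le> j" "k \<noteq> j" "0 < s"
  shows "0 \<le> G_cov M (W k) (W j) s"
  using W_nonneg by (intro G_cov_nonneg[OF _ _ _ _ exceedance _ _ PQD[OF assms(1-3)] assms(4)]) auto

lemma covariance_trunc_sq_W_le:
  assumes "1 \<le> k" "1 \<le> j" "k \<noteq> j" "0 < s"
  shows "covariance M (\<lambda>\<omega>. (min (W k \<omega>) s)\<^sup>2) (\<lambda>\<omega>. (min (W j \<omega>) s)\<^sup>2) \<le> 4 * s\<^sup>2 * G_cov M (W k) (W j) s"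
  using W_nonneg by (intro covariance_trunc_sq_le[OF _ _ _ _ exceedance _ _ PQD[OF assms(1-3)] assms(4)]) auto

lemma expectation_trunc_pow_le:
  assumes "1 \<le> i" "0 < s" "0 < p"
  shows "expectation (\<lambda>\<omega>. (min (W i \<omega>) s) ^ p) \<le> C * expectation (\<lambda>\<omega>. (min \<bar>Z \<omega>\<bar> s) ^ p)"
proof (rule expectation_trunc_le_dominated[OF W_measurable Z_measurable W_nonneg _ dominated[OF assms(1)]])
  show "mono_on {0..} (\<lambda>x::real. x ^ p)" by (auto intro!: mono_onI power_mono)
  show "continuous_on UNIV (\<lambda>x::real. x ^ p)" by (intro continuous_intros)
qed (use assms C_pos in auto)

lemma expectation_trunc_sq_le:
  assumes "1 \<le> i" "0 < s"
  shows "expectation (\<lambda>\<omega>. (min (W i \<omega>) s)\<^sup>2) \<le> C * expectation (\<lambda>\<omega>. (Z \<omega>)\<^sup>2)"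
proof -
  have "expectation (\<lambda>\<omega>. (min (W i \<omega>) s)\<^sup>2) \<le> C * expectation (\<lambda>\<omega>. (min \<bar>Z \<omega>\<bar> s)\<^sup>2)"
    using assms by (rule expectation_trunc_pow_le) simp
  also have "expectation (\<lambda>\<omega>. (min \<bar>Z \<omega>\<bar> s)\<^sup>2) \<le> expectation (\<lambda>\<omega>. (Z \<omega>)\<^sup>2)"
  proof (rule integral_mono[OF _ integrable_Z_sq])
    show "integrable M (\<lambda>\<omega>. (min \<bar>Z \<omega>\<bar> s)\<^sup>2)"
      by (rule integrable_const_bound[where B="s\<^sup>2"]) (use assms in \<open>auto intro!: power_mono\<close>)
    show "(min \<bar>Z \<omega>\<bar> s)\<^sup>2 \<le> (Z \<omega>)\<^sup>2" for \<omega>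
      using power_mono[of "min \<bar>Z \<omega>\<bar> s" "\<bar>Z \<omega>\<bar>" 2] assms by simp
  qed
  then have "C * expectation (\<lambda>\<omega>. (min \<bar>Z \<omega>\<bar> s)\<^sup>2) \<le> C * expectation (\<lambda>\<omega>. (Z \<omega>)\<^sup>2)"
    using C_pos by (intro mult_left_mono) auto
  finally show ?thesis .
qed

lemma expectation_trunc_pow4_le:
  assumes "1 \<le> i" "0 < t" "t \<le> b"
  shows "expectation (\<lambda>\<omega>. (min (W i \<omega>) (sqrt t)) ^ 4) \<le> C * expectation (\<lambda>\<omega>. (min ((Z \<omega>)\<^sup>2) b)\<^sup>2)"
proof -
  have "expectation (\<lambda>\<omega>. (min (W i \<omega>) (sqrt t)) ^ 4) \<le> C * expectation (\<lambda>\<omega>. (min \<bar>Z \<omega>\<bar> (sqrt t)) ^ 4)"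
    using assms by (intro expectation_trunc_pow_le) auto
  also have "expectation (\<lambda>\<omega>. (min \<bar>Z \<omega>\<bar> (sqrt t)) ^ 4) \<le> expectation (\<lambda>\<omega>. (min ((Z \<omega>)\<^sup>2) b)\<^sup>2)"
  proof (rule integral_mono)
    show "integrable M (\<lambda>\<omega>. (min \<bar>Z \<omega>\<bar> (sqrt t)) ^ 4)"
      by (rule integrable_const_bound[where B="(sqrt t) ^ 4"]) (use assms in \<open>auto intro!: power_mono\<close>)
    show "integrable M (\<lambda>\<omega>. (min ((Z \<omega>)\<^sup>2) b)\<^sup>2)"
      by (rule integrable_const_bound[where B="b\<^sup>2"]) (use assms in \<open>auto intro!: power_mono\<close>)
    fix \<omega>
    have "(min \<bar>Z \<omega>\<bar> (sqrt t)) ^ 4 = ((min \<bar>Z \<omega>\<bar> (sqrt t))\<^sup>2)\<^sup>2" by simp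
    also have "\<dots> = (min ((Z \<omega>)\<^sup>2) t)\<^sup>2" using assms by (simp add: min_abs_sqrt_sq)
    also have "\<dots> \<le> (min ((Z \<omega>)\<^sup>2) b)\<^sup>2"
      using assms by (intro power_mono) auto
    finally show "(min \<bar>Z \<omega>\<bar> (sqrt t)) ^ 4 \<le> (min ((Z \<omega>)\<^sup>2) b)\<^sup>2" .
  qed
  then have "C * expectation (\<lambda>\<omega>. (min \<bar>Z \<omega>\<bar> (sqrt t)) ^ 4) \<le> C * expectation (\<lambda>\<omega>. (min ((Z \<omega>)\<^sup>2) b)\<^sup>2)"
    using C_pos by (intro mult_left_mono) auto
  finally show ?thesis .
qed

lemma trunc_sq_le:
  assumes "\<omega> \<in> space M" "0 \<le> t"
  shows "(min (W i \<omega>) (sqrt t))\<^sup>2 \<le> t"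
  using W_nonneg[OF assms(1)] assms(2) power_mono[of "min (W i \<omega>) (sqrt t)" "sqrt t" 2] by auto

lemma integrable_trunc_sq: "0 \<le> t \<Longrightarrow> integrable M (\<lambda>\<omega>. (min (W i \<omega>) (sqrt t))\<^sup>2)"
  by (rule integrable_const_bound[where B=t]) (auto intro!: AE_I2 trunc_sq_le)

definition block_cov :: "nat \<Rightarrow> real \<Rightarrow> real" where
  "block_cov N t = (\<Sum>j\<in>{1..N}. \<Sum>k\<in>{1..<j}. G_cov M (W k) (W j) (sqrt t))"

lemma block_cov_nonneg: "0 < t \<Longrightarrow> 0 \<le> block_cov N t"
  unfolding block_cov_def by (intro sum_nonneg G_cov_W_nonneg) auto

lemma variance_trunc_sum_le:
  assumes "0 < t"
  shows "variance (\<lambda>\<omega>. \<Sum>i\<in>{1..N}. (min (W i \<omega>) (sqrt t))\<^sup>2)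
    \<le> (\<Sum>j\<in>{1..N}. expectation (\<lambda>\<omega>. (min (W j \<omega>) (sqrt t)) ^ 4)) + 8 * t * block_cov N t"
proof -
  define U where "U i \<omega> = (min (W i \<omega>) (sqrt t))\<^sup>2" for i \<omega>
  have U_bounds: "0 \<le> U i \<omega> \<and> U i \<omega> \<le> t" if "\<omega> \<in> space M" for i \<omega>
    using trunc_sq_le[OF that] assms unfolding U_def by simp
  have [measurable]: "U i \<in> borel_measurable M" for i unfolding U_def by measurable
  have "integrable M (U i)" for i
    by (rule integrable_const_bound[where B=t]) (use U_bounds in auto)
  moreover have "integrable M (\<lambda>\<omega>. U i \<omega> * U j \<omega>)" for i j
    by (rule integrable_const_bound[where B="t * t"]) (use U_bounds assms in \<open>auto simp: abs_mult intro!: AE_I2 mult_mono\<close>)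
  ultimately have "variance (\<lambda>\<omega>. \<Sum>i\<in>{1..N}. U i \<omega>) = (\<Sum>k\<in>{1..N}. \<Sum>j\<in>{1..N}. covariance M (U k) (U j))"
    by (intro variance_sum_eq) auto
  also have "\<dots> = (\<Sum>j\<in>{1..N}. covariance M (U j) (U j)) + 2 * (\<Sum>j\<in>{1..N}. \<Sum>k\<in>{1..<j}. covariance M (U k) (U j))"
    by (rule double_sum_symmetric) (simp add: covariance_def mult.commute)
  also have "\<dots> \<le> (\<Sum>j\<in>{1..N}. expectation (\<lambda>\<omega>. (min (W j \<omega>) (sqrt t)) ^ 4))
      + 2 * (\<Sum>j\<in>{1..N}. \<Sum>k\<in>{1..<j}. 4 * t * G_cov M (W k) (W j) (sqrt t))"
  proof (intro add_mono mult_left_mono sum_mono)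
    fix j
    have "covariance M (U j) (U j) \<le> expectation (\<lambda>\<omega>. U j \<omega> * U j \<omega>)"
      unfolding covariance_def by simp
    then show "covariance M (U j) (U j) \<le> expectation (\<lambda>\<omega>. (min (W j \<omega>) (sqrt t)) ^ 4)"
      unfolding U_def by (simp add: power2_eq_square power4_eq_xxxx mult.assoc)
  next
    fix j k assume "j \<in> {1..N}" "k \<in> {1..<j}"
    then show "covariance M (U k) (U j) \<le> 4 * t * G_cov M (W k) (W j) (sqrt t)"
      using covariance_trunc_sq_W_le[of k j "sqrt t"] assms unfolding U_def by simp
  qed simp
  finally show ?thesis
    unfolding U_def block_cov_def by (simp add: sum_distrib_left mult.assoc)
qed

definition block_exceeds :: "nat \<Rightarrow> 'a set" where
  "block_exceeds m =
     {\<omega>\<in>space M. (C * expectation (\<lambda>\<omega>. (Z \<omega>)\<^sup>2) + 1) * 2 ^ m < (\<Sum>i\<in>{1..2 ^ m}. (W i \<omega>)\<^sup>2)}"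

definition block_bound :: "nat \<Rightarrow> real" where
  "block_bound m = C * (2 ^ m * prob {\<omega>\<in>space M. 2 ^ m < (Z \<omega>)\<^sup>2})
     + C * (expectation (\<lambda>\<omega>. (min ((Z \<omega>)\<^sup>2) (2 ^ (m + 1)))\<^sup>2) / 2 ^ m)"

lemma block_exceeds_sets[measurable]: "block_exceeds m \<in> sets M"
  unfolding block_exceeds_def by measurable

lemma prob_exists_exceeds_le:
  assumes "0 < x"
  shows "prob {\<omega>\<in>space M. \<exists>i\<in>{1..N}. x < W i \<omega>} \<le> N * C * prob {\<omega>\<in>space M. x < \<bar>Z \<omega>\<bar>}"
proof -
  have "{\<omega>\<in>space M. \<exists>i\<in>{1..N}. x < W i \<omega>} = (\<Union>i\<in>{1..N}. {\<omega>\<in>space M. x < W i \<omega>})" by auto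
  then have "prob {\<omega>\<in>space M. \<exists>i\<in>{1..N}. x < W i \<omega>} \<le> (\<Sum>i\<in>{1..N}. prob {\<omega>\<in>space M. x < W i \<omega>})"
    by (simp add: measure_UNION_le)
  also have "\<dots> \<le> (\<Sum>i\<in>{1..N}. C * prob {\<omega>\<in>space M. x < \<bar>Z \<omega>\<bar>})"
    using assms by (intro sum_mono dominated) auto
  finally show ?thesis by simp
qed

lemma prob_trunc_sum_deviation_le:
  assumes "0 < N" "0 < t" "t \<le> 2 * real N"
  defines "S \<equiv> \<lambda>\<omega>. \<Sum>i\<in>{1..N}. (min (W i \<omega>) (sqrt t))\<^sup>2"
  shows "prob {\<omega>\<in>space M. real N \<le> \<bar>S \<omega> - expectation S\<bar>}
    \<le> C * (expectation (\<lambda>\<omega>. (min ((Z \<omega>)\<^sup>2) (2 * real N))\<^sup>2) / N) + 16 / N * block_cov N t"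
proof -
  have [measurable]: "S \<in> borel_measurable M" unfolding S_def by measurable
  have S_bounds: "0 \<le> S \<omega> \<and> S \<omega> \<le> N * t" if "\<omega> \<in> space M" for \<omega>
    using trunc_sq_le[OF that] assms sum_mono[of "{1..N}" _ "\<lambda>_. t"] unfolding S_def
    by (auto intro: sum_nonneg)
  have var: "variance S \<le> N * (C * expectation (\<lambda>\<omega>. (min ((Z \<omega>)\<^sup>2) (2 * real N))\<^sup>2)) + 8 * t * block_cov N t"
  proof -
    have "(\<Sum>j\<in>{1..N}. expectation (\<lambda>\<omega>. (min (W j \<omega>) (sqrt t)) ^ 4))
        \<le> (\<Sum>j\<in>{1..N}. C * expectation (\<lambda>\<omega>. (min ((Z \<omega>)\<^sup>2) (2 * real N))\<^sup>2))"
      using assms by (intro sum_mono expectation_trunc_pow4_le) auto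
    then show ?thesis using variance_trunc_sum_le[OF \<open>0 < t\<close>, of N] unfolding S_def by simp
  qed
  have "prob {\<omega>\<in>space M. real N \<le> \<bar>S \<omega> - expectation S\<bar>} \<le> variance S / (real N)\<^sup>2"
  proof (rule Chebyshev_inequality)
    show "integrable M (\<lambda>\<omega>. (S \<omega>)\<^sup>2)"
      by (rule integrable_const_bound[where B="(N * t)\<^sup>2"]) (use S_bounds in \<open>auto intro!: AE_I2 power_mono\<close>)
  qed (use assms in auto)
  also have "\<dots> \<le> (N * (C * expectation (\<lambda>\<omega>. (min ((Z \<omega>)\<^sup>2) (2 * real N))\<^sup>2)) + 8 * t * block_cov N t) / (real N)\<^sup>2"
    using var by (rule divide_right_mono) simp
  also have "\<dots> \<le> C * (expectation (\<lambda>\<omega>. (min ((Z \<omega>)\<^sup>2) (2 * real N))\<^sup>2) / N) + 16 / N * block_cov N t"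
  proof -
    have "8 * t / (real N)\<^sup>2 \<le> 16 / N" using assms by (simp add: field_simps power2_eq_square)
    then have "8 * t / (real N)\<^sup>2 * block_cov N t \<le> 16 / N * block_cov N t"
      using block_cov_nonneg[OF \<open>0 < t\<close>] by (rule mult_right_mono)
    then show ?thesis using assms by (simp add: field_simps power2_eq_square)
  qed
  finally show ?thesis .
qed

lemma block_exceeds_subset:
  assumes "2 ^ m \<le> t"
  defines "S \<equiv> \<lambda>\<omega>. \<Sum>i\<in>{1..2 ^ m}. (min (W i \<omega>) (sqrt t))\<^sup>2"
  shows "block_exceeds m \<subseteq> {\<omega>\<in>space M. \<exists>i\<in>{1..2 ^ m}. sqrt (2 ^ m) < W i \<omega>}
    \<union> {\<omega>\<in>space M. 2 ^ m \<le> \<bar>S \<omega> - expectation S\<bar>}"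
proof
  have "0 < t" using less_le_trans[OF zero_less_power assms(1)] by simp
  have "expectation S = (\<Sum>i\<in>{1..2 ^ m}. expectation (\<lambda>\<omega>. (min (W i \<omega>) (sqrt t))\<^sup>2))"
    unfolding S_def using \<open>0 < t\<close> by (simp add: Bochner_Integration.integral_sum integrable_trunc_sq)
  also have "\<dots> \<le> (\<Sum>i\<in>{1..2 ^ m::nat}. C * expectation (\<lambda>\<omega>. (Z \<omega>)\<^sup>2))"
    using \<open>0 < t\<close> by (intro sum_mono expectation_trunc_sq_le) auto
  also have "\<dots> = 2 ^ m * (C * expectation (\<lambda>\<omega>. (Z \<omega>)\<^sup>2))" by simp
  finally have ES: "expectation S \<le> 2 ^ m * (C * expectation (\<lambda>\<omega>. (Z \<omega>)\<^sup>2))" .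
  fix \<omega> assume \<omega>: "\<omega> \<in> block_exceeds m"
  then have "\<omega> \<in> space M" unfolding block_exceeds_def by simp
  show "\<omega> \<in> {\<omega>\<in>space M. \<exists>i\<in>{1..2 ^ m}. sqrt (2 ^ m) < W i \<omega>} \<union> {\<omega>\<in>space M. 2 ^ m \<le> \<bar>S \<omega> - expectation S\<bar>}"
  proof (cases "\<exists>i\<in>{1..2 ^ m}. sqrt (2 ^ m) < W i \<omega>")
    case False
    have "sqrt (2 ^ m) \<le> sqrt t" using assms(1) by simp
    then have "W i \<omega> \<le> sqrt t" if "i \<in> {1..2 ^ m}" for i
      using False that by (meson not_less order_trans)
    then have "S \<omega> = (\<Sum>i\<in>{1..2 ^ m}. (W i \<omega>)\<^sup>2)" unfolding S_def by (intro sum.cong) auto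
    then show ?thesis using \<omega> ES \<open>\<omega> \<in> space M\<close> unfolding block_exceeds_def by (auto simp: algebra_simps)
  qed (use \<open>\<omega> \<in> space M\<close> in auto)
qed

(* The truncation level sqrt t is free in [2^m, 2^(m+1)]; averaging over it in
   block_excess_le_integral produces the covariance series of the hypothesis. *)
lemma prob_block_exceeds_le:
  assumes "2 ^ m \<le> t" "t \<le> 2 * 2 ^ m"
  shows "prob (block_exceeds m) \<le> block_bound m + 16 / 2 ^ m * block_cov (2 ^ m) t"
proof -
  have "0 < t" using less_le_trans[OF zero_less_power assms(1)] by simp
  define S where "S \<omega> = (\<Sum>i\<in>{1..2 ^ m}. (min (W i \<omega>) (sqrt t))\<^sup>2)" for \<omega>
  define B where "B = {\<omega>\<in>space M. \<exists>i\<in>{1..2 ^ m}. sqrt (2 ^ m) < W i \<omega>}"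
  define E where "E = {\<omega>\<in>space M. 2 ^ m \<le> \<bar>S \<omega> - expectation S\<bar>}"
  have [measurable]: "B \<in> sets M" "E \<in> sets M" unfolding B_def E_def S_def by measurable
  have "prob (block_exceeds m) \<le> prob (B \<union> E)"
    using block_exceeds_subset[OF assms(1)] unfolding B_def E_def S_def by (intro finite_measure_mono) auto
  also have "\<dots> \<le> prob B + prob E" by (rule measure_Un_le) auto
  also have "prob B \<le> C * (2 ^ m * prob {\<omega>\<in>space M. 2 ^ m < (Z \<omega>)\<^sup>2})"
  proof -
    have "sqrt (2 ^ m) < \<bar>z\<bar> \<longleftrightarrow> 2 ^ m < z\<^sup>2" for z :: real
      by (metis real_sqrt_abs real_sqrt_less_iff)
    then have "{\<omega>\<in>space M. sqrt (2 ^ m) < \<bar>Z \<omega>\<bar>} = {\<omega>\<in>space M. 2 ^ m < (Z \<omega>)\<^sup>2}" by simp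
    then show ?thesis using prob_exists_exceeds_le[of "sqrt (2 ^ m)" "2 ^ m"] unfolding B_def by (simp add: mult_ac)
  qed
  also have "prob E \<le> C * (expectation (\<lambda>\<omega>. (min ((Z \<omega>)\<^sup>2) (2 ^ (m + 1)))\<^sup>2) / 2 ^ m)
      + 16 / 2 ^ m * block_cov (2 ^ m) t"
    using prob_trunc_sum_deviation_le[of "2 ^ m" t] assms \<open>0 < t\<close> unfolding E_def S_def by simp
  finally show ?thesis unfolding block_bound_def by simp
qed

definition cov_density :: "nat \<Rightarrow> real \<Rightarrow> ennreal" where
  "cov_density j t = (\<Sum>k\<in>{1..<j}. ennreal (1 / t\<^sup>2 * G_cov M (W k) (W j) (sqrt t)))"

lemma cov_density_measurable[measurable]: "cov_density j \<in> borel_measurable borel"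
  unfolding cov_density_def G_cov_def trunc_g_def by measurable

lemma ennreal_block_cov:
  assumes "0 < t"
  shows "ennreal (block_cov N t / t\<^sup>2) = (\<Sum>j\<in>{1..N}. cov_density j t)"
proof -
  have nonneg: "0 \<le> 1 / t\<^sup>2 * G_cov M (W k) (W j) (sqrt t)" if "j \<in> {1..N}" "k \<in> {1..<j}" for j k
    using that assms by (intro mult_nonneg_nonneg G_cov_W_nonneg) auto
  have "ennreal (block_cov N t / t\<^sup>2) = ennreal (\<Sum>j\<in>{1..N}. \<Sum>k\<in>{1..<j}. 1 / t\<^sup>2 * G_cov M (W k) (W j) (sqrt t))"
    unfolding block_cov_def by (simp add: sum_distrib_left sum_divide_distrib)
  also have "\<dots> = (\<Sum>j\<in>{1..N}. ennreal (\<Sum>k\<in>{1..<j}. 1 / t\<^sup>2 * G_cov M (W k) (W j) (sqrt t)))"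
    using nonneg by (intro sum_ennreal[symmetric] sum_nonneg) auto
  also have "\<dots> = (\<Sum>j\<in>{1..N}. cov_density j t)"
    unfolding cov_density_def using nonneg by (intro sum.cong refl sum_ennreal[symmetric]) auto
  finally show ?thesis .
qed

lemma block_excess_le_integral:
  "ennreal (max 0 (prob (block_exceeds m) - block_bound m) / 64)
    \<le> (\<Sum>j\<in>{1..2 ^ m}. \<integral>\<^sup>+t. indicator (dyadic_ivl m) t * cov_density j t \<partial>lborel)"
proof -
  define N :: real where "N = 2 ^ m"
  define b where "b = max 0 (prob (block_exceeds m) - block_bound m)"
  have "0 < N" "0 \<le> b" unfolding N_def b_def by simp_all
  have pointwise: "ennreal (b / (64 * N)) * indicator (dyadic_ivl m) t
      \<le> indicator (dyadic_ivl m) t * (\<Sum>j\<in>{1..2 ^ m}. cov_density j t)" for t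
  proof (cases "t \<in> dyadic_ivl m")
    case True
    then have t: "N \<le> t" "t \<le> 2 * N" unfolding dyadic_ivl_def N_def by auto
    with \<open>0 < N\<close> have "0 < t" by linarith
    have "b \<le> 16 / N * block_cov (2 ^ m) t"
      using prob_block_exceeds_le[of m t] t block_cov_nonneg[OF \<open>0 < t\<close>] \<open>0 < N\<close>
      unfolding b_def N_def by simp
    then have "b / (64 * N) \<le> block_cov (2 ^ m) t / (4 * N\<^sup>2)"
      using \<open>0 < N\<close> by (simp add: field_simps power2_eq_square)
    also have "\<dots> \<le> block_cov (2 ^ m) t / t\<^sup>2"
    proof (rule divide_left_mono)
      show "t\<^sup>2 \<le> 4 * N\<^sup>2" using power_mono[of t "2 * N" 2] t \<open>0 < t\<close> by (simp add: power_mult_distrib)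
    qed (use \<open>0 < t\<close> \<open>0 < N\<close> block_cov_nonneg[OF \<open>0 < t\<close>] in auto)
    finally have "ennreal (b / (64 * N)) \<le> ennreal (block_cov (2 ^ m) t / t\<^sup>2)"
      by (rule ennreal_leI)
    then show ?thesis
      using True unfolding ennreal_block_cov[OF \<open>0 < t\<close>] by simp
  qed simp
  have "ennreal (b / 64) = ennreal (b / (64 * N)) * emeasure lborel (dyadic_ivl m)"
    unfolding dyadic_ivl_def N_def using \<open>0 \<le> b\<close> by (simp add: ennreal_mult[symmetric] field_simps)
  also have "\<dots> = (\<integral>\<^sup>+t. ennreal (b / (64 * N)) * indicator (dyadic_ivl m) t \<partial>lborel)"
    by (rule nn_integral_cmult_indicator[symmetric]) (simp add: dyadic_ivl_def)
  also have "\<dots> \<le> (\<integral>\<^sup>+t. indicator (dyadic_ivl m) t * (\<Sum>j\<in>{1..2 ^ m}. cov_density j t) \<partial>lborel)"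
    by (intro nn_integral_mono pointwise)
  also have "\<dots> = (\<Sum>j\<in>{1..2 ^ m}. \<integral>\<^sup>+t. indicator (dyadic_ivl m) t * cov_density j t \<partial>lborel)"
    unfolding sum_distrib_left by (rule nn_integral_sum) (simp add: dyadic_ivl_def)
  finally show ?thesis unfolding b_def .
qed

lemma suminf_block_bound_finite: "(\<Sum>m. ennreal (block_bound m)) < \<infinity>"
proof -
  have [measurable]: "(\<lambda>\<omega>. (Z \<omega>)\<^sup>2) \<in> borel_measurable M" by measurable
  define x where "x m = 2 ^ m * prob {\<omega>\<in>space M. 2 ^ m < (Z \<omega>)\<^sup>2}" for m :: nat
  define y where "y m = expectation (\<lambda>\<omega>. (min ((Z \<omega>)\<^sup>2) (2 ^ (m + 1)))\<^sup>2) / 2 ^ m" for m :: nat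
  have "0 \<le> x m" "0 \<le> y m" for m unfolding x_def y_def by auto
  then have "ennreal (block_bound m) = ennreal C * (ennreal (x m) + ennreal (y m))" for m
    unfolding block_bound_def x_def[symmetric] y_def[symmetric] using C_pos
    by (simp add: ennreal_mult ennreal_plus distrib_left[symmetric])
  then have "(\<Sum>m. ennreal (block_bound m)) = ennreal C * ((\<Sum>m. ennreal (x m)) + (\<Sum>m. ennreal (y m)))"
    by (simp add: ennreal_suminf_cmult suminf_add)
  also have "\<dots> \<le> ennreal C * (ennreal (2 * expectation (\<lambda>\<omega>. (Z \<omega>)\<^sup>2)) + ennreal (8 * expectation (\<lambda>\<omega>. (Z \<omega>)\<^sup>2)))"
    unfolding x_def y_def
    by (intro add_mono mult_left_mono suminf_pow2_tail_le suminf_trunc_sq_le integrable_Z_sq) auto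
  also have "\<dots> < \<infinity>" by (simp add: ennreal_mult_less_top)
  finally show ?thesis .
qed

lemma summable_prob_block_exceeds:
  assumes "(\<Sum>j. \<Sum>k\<in>{1..<j}. \<integral>\<^sup>+t. indicator {real j..} t * ennreal (1 / t\<^sup>2 * G_cov M (W k) (W j) (sqrt t)) \<partial>lborel) < \<infinity>"
  shows "summable (\<lambda>m. prob (block_exceeds m))"
proof (rule summable_suminf_not_top)
  define b where "b m = max 0 (prob (block_exceeds m) - block_bound m)" for m
  have "(\<Sum>m. ennreal (b m / 64)) \<le> (\<Sum>m. \<Sum>j\<in>{1..2 ^ m}. \<integral>\<^sup>+t. indicator (dyadic_ivl m) t * cov_density j t \<partial>lborel)"
    unfolding b_def by (intro suminf_le summableI block_excess_le_integral)
  also have "\<dots> \<le> (\<Sum>j. \<integral>\<^sup>+t. indicator {real j..} t * cov_density j t \<partial>lborel)"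
    by (rule suminf_dyadic_blocks_le) measurable
  also have "\<dots> = (\<Sum>j. \<Sum>k\<in>{1..<j}. \<integral>\<^sup>+t. indicator {real j..} t * ennreal (1 / t\<^sup>2 * G_cov M (W k) (W j) (sqrt t)) \<partial>lborel)"
    unfolding cov_density_def sum_distrib_left
    by (intro suminf_cong nn_integral_sum) (unfold G_cov_def trunc_g_def, measurable)
  finally have b_finite: "(\<Sum>m. ennreal (b m / 64)) < \<infinity>" using assms by simp
  have "0 \<le> b m" for m unfolding b_def by simp
  have "ennreal (prob (block_exceeds m)) \<le> ennreal (block_bound m) + 64 * ennreal (b m / 64)" for m
  proof -
    have "0 \<le> block_bound m"
      unfolding block_bound_def using C_pos by (intro add_nonneg_nonneg mult_nonneg_nonneg divide_nonneg_nonneg) auto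
    moreover have "prob (block_exceeds m) \<le> block_bound m + b m" unfolding b_def by simp
    ultimately have "ennreal (prob (block_exceeds m)) \<le> ennreal (block_bound m) + ennreal (b m)"
      using \<open>0 \<le> b m\<close> by (simp add: ennreal_plus[symmetric] ennreal_leI del: ennreal_plus)
    moreover have "ennreal (b m) = 64 * ennreal (b m / 64)"
      using ennreal_mult[of 64 "b m / 64"] \<open>0 \<le> b m\<close> by simp
    ultimately show ?thesis by simp
  qed
  then have "(\<Sum>m. ennreal (prob (block_exceeds m))) \<le> (\<Sum>m. ennreal (block_bound m) + 64 * ennreal (b m / 64))"
    by (intro suminf_le summableI)
  also have "\<dots> = (\<Sum>m. ennreal (block_bound m)) + 64 * (\<Sum>m. ennreal (b m / 64))"
    by (simp add: suminf_add[symmetric] ennreal_suminf_cmult)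
  also have "\<dots> < \<infinity>"
    using suminf_block_bound_finite b_finite by (simp add: ennreal_mult_less_top)
  finally show "(\<Sum>m. ennreal (prob (block_exceeds m))) \<noteq> \<top>" by simp
qed simp

theorem AE_sum_sq_linear_bound:
  assumes "(\<Sum>j. \<Sum>k\<in>{1..<j}. \<integral>\<^sup>+t. indicator {real j..} t * ennreal (1 / t\<^sup>2 * G_cov M (W k) (W j) (sqrt t)) \<partial>lborel) < \<infinity>"
  shows "AE \<omega> in M. \<exists>K. \<forall>\<^sub>F n in sequentially. (\<Sum>i\<in>{1..n}. (W i \<omega>)\<^sup>2) \<le> K * real n"
proof -
  have "AE \<omega> in M. \<forall>\<^sub>F m in sequentially. \<omega> \<in> space M - block_exceeds m"
    using summable_prob_block_exceeds[OF assms] by (intro borel_cantelli_AE1) (auto simp: emeasure_eq_measure)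
  then show ?thesis
  proof (rule AE_mp, intro AE_I2 impI)
    fix \<omega> assume "\<omega> \<in> space M" and "\<forall>\<^sub>F m in sequentially. \<omega> \<in> space M - block_exceeds m"
    then have "\<forall>\<^sub>F m in sequentially. (\<Sum>i\<in>{1..2 ^ m}. (W i \<omega>)\<^sup>2) \<le> (C * expectation (\<lambda>\<omega>. (Z \<omega>)\<^sup>2) + 1) * 2 ^ m"
      by (auto elim!: eventually_mono simp: block_exceeds_def not_less)
    moreover have "0 \<le> C * expectation (\<lambda>\<omega>. (Z \<omega>)\<^sup>2) + 1" using C_pos by simp
    ultimately have "\<forall>\<^sub>F n in sequentially. (\<Sum>i\<in>{1..n}. (W i \<omega>)\<^sup>2)
        \<le> 2 * (C * expectation (\<lambda>\<omega>. (Z \<omega>)\<^sup>2) + 1) * real n"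
      by (intro linear_bound_from_dyadic[where a="\<lambda>i. (W i \<omega>)\<^sup>2"]) auto
    then show "\<exists>K. \<forall>\<^sub>F n in sequentially. (\<Sum>i\<in>{1..n}. (W i \<omega>)\<^sup>2) \<le> K * real n" by blast
  qed
qed

end

section \<open>Positive and negative parts of pairwise PQD errors\<close>

lemma suminf_cov_series_mono:
  fixes f g :: "nat \<Rightarrow> nat \<Rightarrow> real \<Rightarrow> real"
  assumes "\<And>j k t. 1 \<le> k \<Longrightarrow> k < j \<Longrightarrow> real j \<le> t \<Longrightarrow> f k j t \<le> g k j t"
  shows "(\<Sum>j. \<Sum>k\<in>{1..<j}. \<integral>\<^sup>+t. indicator {real j..} t * ennreal (f k j t) \<partial>lborel)
    \<le> (\<Sum>j. \<Sum>k\<in>{1..<j}. \<integral>\<^sup>+t. indicator {real j..} t * ennreal (g k j t) \<partial>lborel)"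
  by (intro suminf_le summableI sum_mono nn_integral_mono) (auto simp: indicator_def assms ennreal_leI)

context prob_space
begin

lemma prob_inter_compl_diff:
  assumes [measurable]: "A \<in> events" "B \<in> events"
  shows "prob ((space M - A) \<inter> (space M - B)) - prob (space M - A) * prob (space M - B)
    = prob (A \<inter> B) - prob A * prob B"
proof -
  have "(space M - A) \<inter> (space M - B) = space M - (A \<union> B)" by auto
  moreover have "prob (A \<union> B) = prob A + prob B - prob (A \<inter> B)"
    by (intro measure_Un3) (auto simp: fmeasurable_eq_sets)
  ultimately show ?thesis by (simp add: prob_compl algebra_simps)
qed

lemma PQD_tails_pos_part:
  assumes [measurable]: "\<And>n. \<epsilon> n \<in> borel_measurable M"
    and "pairwise_PQD M \<epsilon>" "1 \<le> k" "1 \<le> j" "k \<noteq> j"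
  shows "PQD_tails M (\<lambda>u x. x < u) (\<lambda>\<omega>. max (\<epsilon> k \<omega>) 0) (\<lambda>\<omega>. max (\<epsilon> j \<omega>) 0)"
  unfolding PQD_tails_def
proof (intro allI impI)
  fix x y :: real assume "0 \<le> x" "0 \<le> y"
  define A where "A = {\<omega>\<in>space M. \<epsilon> k \<omega> \<le> x}"
  define B where "B = {\<omega>\<in>space M. \<epsilon> j \<omega> \<le> y}"
  have [measurable]: "A \<in> events" "B \<in> events" unfolding A_def B_def by measurable
  have "A \<inter> B = {\<omega>\<in>space M. \<epsilon> k \<omega> \<le> x \<and> \<epsilon> j \<omega> \<le> y}" unfolding A_def B_def by auto
  then have "0 \<le> prob (A \<inter> B) - prob A * prob B"
    using assms(2-) unfolding pairwise_PQD_def A_def B_def by simp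
  then have "0 \<le> prob ((space M - A) \<inter> (space M - B)) - prob (space M - A) * prob (space M - B)"
    by (simp only: prob_inter_compl_diff[OF \<open>A \<in> events\<close> \<open>B \<in> events\<close>])
  moreover have "{\<omega>\<in>space M. x < max (\<epsilon> k \<omega>) 0 \<and> y < max (\<epsilon> j \<omega>) 0} = (space M - A) \<inter> (space M - B)"
    "{\<omega>\<in>space M. x < max (\<epsilon> k \<omega>) 0} = space M - A" "{\<omega>\<in>space M. y < max (\<epsilon> j \<omega>) 0} = space M - B"
    unfolding A_def B_def using \<open>0 \<le> x\<close> \<open>0 \<le> y\<close> by auto
  ultimately show "0 \<le> prob {\<omega>\<in>space M. x < max (\<epsilon> k \<omega>) 0 \<and> y < max (\<epsilon> j \<omega>) 0}
      - prob {\<omega>\<in>space M. x < max (\<epsilon> k \<omega>) 0} * prob {\<omega>\<in>space M. y < max (\<epsilon> j \<omega>) 0}"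
    by simp
qed

lemma PQD_tails_neg_part:
  assumes [measurable]: "\<And>n. \<epsilon> n \<in> borel_measurable M"
    and "pairwise_PQD M \<epsilon>" "1 \<le> k" "1 \<le> j" "k \<noteq> j"
  shows "PQD_tails M (\<lambda>u x. x \<le> u) (\<lambda>\<omega>. max (- \<epsilon> k \<omega>) 0) (\<lambda>\<omega>. max (- \<epsilon> j \<omega>) 0)"
  unfolding PQD_tails_def
proof (intro allI impI)
  fix x y :: real assume "0 \<le> x" "0 \<le> y"
  show "0 \<le> prob {\<omega>\<in>space M. x \<le> max (- \<epsilon> k \<omega>) 0 \<and> y \<le> max (- \<epsilon> j \<omega>) 0}
      - prob {\<omega>\<in>space M. x \<le> max (- \<epsilon> k \<omega>) 0} * prob {\<omega>\<in>space M. y \<le> max (- \<epsilon> j \<omega>) 0}"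
  proof (cases "x = 0 \<or> y = 0")
    case True
    then show ?thesis
      using \<open>0 \<le> x\<close> \<open>0 \<le> y\<close> by (auto simp: prob_space mult_le_cancel_right1 mult_le_cancel_left1)
  next
    case False
    then have "{\<omega>\<in>space M. x \<le> max (- \<epsilon> k \<omega>) 0 \<and> y \<le> max (- \<epsilon> j \<omega>) 0} = {\<omega>\<in>space M. \<epsilon> k \<omega> \<le> - x \<and> \<epsilon> j \<omega> \<le> - y}"
      "{\<omega>\<in>space M. x \<le> max (- \<epsilon> k \<omega>) 0} = {\<omega>\<in>space M. \<epsilon> k \<omega> \<le> - x}"
      "{\<omega>\<in>space M. y \<le> max (- \<epsilon> j \<omega>) 0} = {\<omega>\<in>space M. \<epsilon> j \<omega> \<le> - y}"
      using \<open>0 \<le> x\<close> \<open>0 \<le> y\<close> by auto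
    then show ?thesis using assms(2-) unfolding pairwise_PQD_def by simp
  qed
qed

lemma PQD_dominated_seq_parts:
  assumes [measurable]: "\<And>n. \<epsilon> n \<in> borel_measurable M" "Z \<in> borel_measurable M"
    and PQD: "pairwise_PQD M \<epsilon>" and "0 < C"
    and dominated: "\<And>n x. 1 \<le> n \<Longrightarrow> 0 < x \<Longrightarrow> prob {\<omega>\<in>space M. x < \<bar>\<epsilon> n \<omega>\<bar>} \<le> C * prob {\<omega>\<in>space M. x < \<bar>Z \<omega>\<bar>}"
    and "integrable M (\<lambda>\<omega>. (Z \<omega>)\<^sup>2)"
  shows "PQD_dominated_seq M (\<lambda>i \<omega>. max (\<epsilon> i \<omega>) 0) Z C (\<lambda>u x. x < u)"
    and "PQD_dominated_seq M (\<lambda>i \<omega>. max (- \<epsilon> i \<omega>) 0) Z C (\<lambda>u x. x \<le> u)"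
proof -
  have part_dominated: "prob {\<omega>\<in>space M. x < W i \<omega>} \<le> C * prob {\<omega>\<in>space M. x < \<bar>Z \<omega>\<bar>}"
    if [measurable]: "W i \<in> borel_measurable M" and "\<And>\<omega>. W i \<omega> \<le> \<bar>\<epsilon> i \<omega>\<bar>" "1 \<le> i" "0 < x" for W i x
  proof -
    have "prob {\<omega>\<in>space M. x < W i \<omega>} \<le> prob {\<omega>\<in>space M. x < \<bar>\<epsilon> i \<omega>\<bar>}"
      using that(2) by (intro finite_measure_mono) (auto intro: less_le_trans)
    then show ?thesis using dominated[OF that(3,4)] by linarith
  qed
  show "PQD_dominated_seq M (\<lambda>i \<omega>. max (\<epsilon> i \<omega>) 0) Z C (\<lambda>u x. x < u)"
    using assms exceedance_strict PQD_tails_pos_part[OF _ PQD]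
    by unfold_locales (auto intro!: part_dominated)
  show "PQD_dominated_seq M (\<lambda>i \<omega>. max (- \<epsilon> i \<omega>) 0) Z C (\<lambda>u x. x \<le> u)"
    using assms exceedance_nonstrict PQD_tails_neg_part[OF _ PQD]
    by unfold_locales (auto intro!: part_dominated)
qed

theorem AE_sum_sq_errors_linear_bound:
  assumes [measurable]: "\<And>n. \<epsilon> n \<in> borel_measurable M" "Z \<in> borel_measurable M"
    and "pairwise_PQD M \<epsilon>" "stoch_dominated M \<epsilon> Z" "integrable M (\<lambda>\<omega>. (Z \<omega>)\<^sup>2)"
    and cov_series: "(\<Sum>j. \<Sum>k\<in>{1..<j}.
           \<integral>\<^sup>+ t. indicator {real j..} t *
             ennreal (1 / t\<^sup>2 *
               (G_cov M (\<lambda>\<omega>. max (\<epsilon> k \<omega>) 0) (\<lambda>\<omega>. max (\<epsilon> j \<omega>) 0) (sqrt t)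
              + G_cov M (\<lambda>\<omega>. max (- \<epsilon> k \<omega>) 0) (\<lambda>\<omega>. max (- \<epsilon> j \<omega>) 0) (sqrt t)))
           \<partial>lborel) < \<infinity>"
  shows "AE \<omega> in M. \<exists>K. \<forall>\<^sub>F n in sequentially. (\<Sum>i\<in>{1..n}. (\<epsilon> i \<omega>)\<^sup>2) \<le> K * real n"
proof -
  obtain C where "0 < C"
    and "\<And>n x. 1 \<le> n \<Longrightarrow> 0 < x \<Longrightarrow> prob {\<omega>\<in>space M. x < \<bar>\<epsilon> n \<omega>\<bar>} \<le> C * prob {\<omega>\<in>space M. x < \<bar>Z \<omega>\<bar>}"
    using \<open>stoch_dominated M \<epsilon> Z\<close> unfolding stoch_dominated_def by blast
  note parts = PQD_dominated_seq_parts[OF assms(1,2,3) this assms(5)]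
  interpret pos: PQD_dominated_seq M "\<lambda>i \<omega>. max (\<epsilon> i \<omega>) 0" Z C "\<lambda>u x. x < u" by (rule parts(1))
  interpret neg: PQD_dominated_seq M "\<lambda>i \<omega>. max (- \<epsilon> i \<omega>) 0" Z C "\<lambda>u x. x \<le> u" by (rule parts(2))
  have "AE \<omega> in M. \<exists>K. \<forall>\<^sub>F n in sequentially. (\<Sum>i\<in>{1..n}. (max (\<epsilon> i \<omega>) 0)\<^sup>2) \<le> K * real n"
    by (rule pos.AE_sum_sq_linear_bound[OF le_less_trans[OF suminf_cov_series_mono cov_series]])
       (auto intro!: divide_right_mono neg.G_cov_W_nonneg)
  moreover have "AE \<omega> in M. \<exists>K. \<forall>\<^sub>F n in sequentially. (\<Sum>i\<in>{1..n}. (max (- \<epsilon> i \<omega>) 0)\<^sup>2) \<le> K * real n"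
    by (rule neg.AE_sum_sq_linear_bound[OF le_less_trans[OF suminf_cov_series_mono cov_series]])
       (auto intro!: divide_right_mono pos.G_cov_W_nonneg)
  ultimately show ?thesis
  proof eventually_elim
    case (elim \<omega>)
    have sq: "(\<epsilon> i \<omega>)\<^sup>2 = (max (\<epsilon> i \<omega>) 0)\<^sup>2 + (max (- \<epsilon> i \<omega>) 0)\<^sup>2" for i
      by (simp add: max_def power2_eq_square)
    from elim obtain K1 K2 where
      "\<forall>\<^sub>F n in sequentially. (\<Sum>i\<in>{1..n}. (max (\<epsilon> i \<omega>) 0)\<^sup>2) \<le> K1 * real n"
      "\<forall>\<^sub>F n in sequentially. (\<Sum>i\<in>{1..n}. (max (- \<epsilon> i \<omega>) 0)\<^sup>2) \<le> K2 * real n"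
      by blast
    then have "\<forall>\<^sub>F n in sequentially. (\<Sum>i\<in>{1..n}. (\<epsilon> i \<omega>)\<^sup>2) \<le> (K1 + K2) * real n"
      by eventually_elim (simp add: sq sum.distrib algebra_simps)
    then show ?case by blast
  qed
qed

end

section \<open>The least squares error\<close>

definition outer :: "real^'n \<Rightarrow> real^'n^'n" where
  "outer y = (\<chi> a b. y $ a * y $ b)"

lemma XtX_eq_sum_outer: "XtX x n \<omega> = (\<Sum>i\<in>{1..n}. outer (x i \<omega>))"
  unfolding XtX_def outer_def ..

lemma sum_outer_mult_vec: "(\<Sum>i\<in>I. outer (xs i)) *v v = (\<Sum>i\<in>I. (xs i \<bullet> v) *\<^sub>R xs i)"
proof -
  have "((\<Sum>i\<in>I. outer (xs i)) *v v) $ a = (\<Sum>i\<in>I. (xs i \<bullet> v) *\<^sub>R xs i) $ a" for a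
  proof -
    have "((\<Sum>i\<in>I. outer (xs i)) *v v) $ a = (\<Sum>b\<in>UNIV. (\<Sum>i\<in>I. xs i $ a * xs i $ b) * v $ b)"
      by (simp add: matrix_vector_mult_def outer_def sum_component)
    also have "\<dots> = (\<Sum>i\<in>I. (xs i \<bullet> v) * xs i $ a)"
      by (simp add: sum_distrib_right sum_distrib_left inner_vec_def sum.swap[of _ UNIV I] mult_ac)
    finally show ?thesis by (simp add: sum_component)
  qed
  then show ?thesis by (simp add: vec_eq_iff)
qed

lemma inner_sum_outer_mult_vec: "w \<bullet> ((\<Sum>i\<in>I. outer (xs i)) *v v) = (\<Sum>i\<in>I. (xs i \<bullet> v) * (xs i \<bullet> w))"
  unfolding sum_outer_mult_vec by (simp add: inner_sum_right inner_commute)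

lemma invertible_sum_outer_mono:
  assumes "invertible (\<Sum>i\<in>I. outer (xs i))" "I \<subseteq> J" "finite J"
  shows "invertible (\<Sum>i\<in>J. outer (xs i))"
proof -
  have "v = 0" if "(\<Sum>i\<in>J. outer (xs i)) *v v = 0" for v
  proof -
    have "(\<Sum>i\<in>J. (xs i \<bullet> v)\<^sup>2) = 0"
      using arg_cong[OF that, of "inner v"] by (simp add: inner_sum_outer_mult_vec power2_eq_square)
    then have "xs i \<bullet> v = 0" if "i \<in> J" for i
      using that \<open>finite J\<close> by (simp add: sum_nonneg_eq_0_iff)
    then have "(\<Sum>i\<in>I. outer (xs i)) *v v = 0"
      using \<open>I \<subseteq> J\<close> by (auto simp: sum_outer_mult_vec intro!: sum.neutral)
    then show "v = 0"
      using assms(1) matrix_left_invertible_ker invertible_left_inverse by blast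
  qed
  then show ?thesis using matrix_left_invertible_ker invertible_left_inverse by blast
qed

lemma rayleigh_min_attained:
  fixes A :: "real^'n^'n"
  obtains v where "norm v = 1" "\<And>w. (v \<bullet> (A *v v)) * (norm w)\<^sup>2 \<le> w \<bullet> (A *v w)"
proof -
  define f where "f v = v \<bullet> (A *v v)" for v
  have "continuous_on (sphere 0 1) f" unfolding f_def by (intro continuous_intros)
  moreover have "sphere (0::real^'n) 1 \<noteq> {}"
    using vector_choose_size[of 1] by (auto simp: sphere_def dist_norm)
  ultimately obtain v where v: "v \<in> sphere 0 1" and v_min: "\<And>u. u \<in> sphere 0 1 \<Longrightarrow> f v \<le> f u"
    using continuous_attains_inf[OF compact_sphere] by blast
  have "f v * (norm w)\<^sup>2 \<le> f w" for w
  proof (cases "w = 0")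
    case False
    define u where "u = (1 / norm w) *\<^sub>R w"
    have "u \<in> sphere 0 1" unfolding u_def using False by (simp add: sphere_def dist_norm)
    moreover have "f w = (norm w)\<^sup>2 * f u"
      unfolding f_def u_def using False by (simp add: matrix_vector_mult_scaleR power2_eq_square)
    ultimately show ?thesis using v_min mult_right_mono[of "f v" "f u" "(norm w)\<^sup>2"] by (simp add: mult.commute)
  qed (simp add: f_def)
  then show ?thesis using that v unfolding f_def by (simp add: sphere_def dist_norm)
qed

lemma rayleigh_min_eigenvector:
  fixes A :: "real^'n^'n"
  assumes sym: "\<And>v w. w \<bullet> (A *v v) = v \<bullet> (A *v w)"
    and "norm v = 1" and min: "\<And>w. \<mu> * (norm w)\<^sup>2 \<le> w \<bullet> (A *v w)" and \<mu>: "\<mu> = v \<bullet> (A *v v)"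
  shows "A *v v = \<mu> *\<^sub>R v"
proof -
  define d where "d = A *v v - \<mu> *\<^sub>R v"
  define c where "c = d \<bullet> (A *v d) - \<mu> * (norm d)\<^sup>2"
  have quadratic: "0 \<le> 2 * r * (d \<bullet> d) + r\<^sup>2 * c" for r
  proof -
    have "0 \<le> (v + r *\<^sub>R d) \<bullet> (A *v (v + r *\<^sub>R d)) - \<mu> * (norm (v + r *\<^sub>R d))\<^sup>2"
      using min[of "v + r *\<^sub>R d"] by simp
    also have "(v + r *\<^sub>R d) \<bullet> (A *v (v + r *\<^sub>R d))
        = v \<bullet> (A *v v) + r * (v \<bullet> (A *v d)) + r * (d \<bullet> (A *v v)) + r\<^sup>2 * (d \<bullet> (A *v d))"
      by (simp add: matrix_vector_right_distrib matrix_vector_mult_scaleR inner_add_left inner_add_right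
          power2_eq_square algebra_simps)
    also have "v \<bullet> (A *v d) = d \<bullet> (A *v v)" by (rule sym)
    also have "(norm (v + r *\<^sub>R d))\<^sup>2 = 1 + 2 * r * (v \<bullet> d) + r\<^sup>2 * (norm d)\<^sup>2"
    proof -
      have "v \<bullet> v = 1" using \<open>norm v = 1\<close> by (simp flip: power2_norm_eq_inner)
      then show ?thesis
        unfolding power2_norm_eq_inner
        by (simp add: inner_add_left inner_add_right inner_commute algebra_simps power2_eq_square)
    qed
    also have "d \<bullet> (A *v v) = d \<bullet> d + \<mu> * (v \<bullet> d)"
      unfolding d_def by (simp add: inner_diff_left inner_diff_right inner_commute algebra_simps)
    finally show ?thesis unfolding c_def \<mu> by (simp add: algebra_simps power2_eq_square)
  qed
  have "d \<bullet> d = 0"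
  proof (rule ccontr)
    assume "d \<bullet> d \<noteq> 0"
    then have "0 < d \<bullet> d" by (simp add: order_le_neq_trans)
    define k where "k = \<bar>c\<bar> + 1"
    have "1 \<le> k" unfolding k_def by simp
    define r where "r = - (d \<bullet> d) / k"
    have "2 * r * (d \<bullet> d) + r\<^sup>2 * c \<le> 2 * r * (d \<bullet> d) + r\<^sup>2 * k"
      unfolding k_def by (intro add_left_mono mult_left_mono) auto
    also have "\<dots> = - (d \<bullet> d)\<^sup>2 / k"
      unfolding r_def using \<open>1 \<le> k\<close> by (simp add: field_simps power2_eq_square)
    also have "\<dots> < 0" using \<open>0 < d \<bullet> d\<close> \<open>1 \<le> k\<close> by simp
    finally show False using quadratic[of r] by simp
  qed
  then show ?thesis unfolding d_def by simp
qed

lemma matrix_inv_mult: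
  fixes A :: "'a::semiring_1^'n^'n"
  assumes "invertible A"
  shows matrix_inv_right: "A ** matrix_inv A = mat 1" and matrix_inv_left: "matrix_inv A ** A = mat 1"
  using someI_ex[OF assms[unfolded invertible_def]] unfolding matrix_inv_def by auto

lemma bdd_above_eigenvalue_norms:
  fixes B :: "real^'n^'n"
  shows "bdd_above {cmod l | l. \<exists>v :: complex^'n. v \<noteq> 0 \<and> (\<chi> i j. complex_of_real (B $ i $ j)) *v v = l *s v}"
proof (rule bdd_aboveI)
  fix x assume "x \<in> {cmod l | l. \<exists>v :: complex^'n. v \<noteq> 0 \<and> (\<chi> i j. complex_of_real (B $ i $ j)) *v v = l *s v}"
  then obtain l w where x: "x = cmod l" and "w \<noteq> 0" and ev: "(\<chi> i j. complex_of_real (B $ i $ j)) *v w = l *s w"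
    by auto
  have "Max (range (\<lambda>j. cmod (w $ j))) \<in> range (\<lambda>j. cmod (w $ j))" by (rule Max_in) auto
  then obtain i where i: "cmod (w $ i) = Max (range (\<lambda>j. cmod (w $ j)))" by (metis imageE)
  have i_max: "cmod (w $ j) \<le> cmod (w $ i)" for j unfolding i by (rule Max_ge) auto
  have "0 < cmod (w $ i)"
  proof (rule ccontr)
    assume "\<not> 0 < cmod (w $ i)"
    then have "w $ j = 0" for j using i_max[of j] by simp
    then show False using \<open>w \<noteq> 0\<close> by (simp add: vec_eq_iff)
  qed
  have "l * w $ i = (\<Sum>j\<in>UNIV. complex_of_real (B $ i $ j) * w $ j)"
    using ev[THEN arg_cong[where f="\<lambda>u. u $ i"]] by (simp add: matrix_vector_mult_def)
  then have "cmod l * cmod (w $ i) \<le> (\<Sum>j\<in>UNIV. \<bar>B $ i $ j\<bar> * cmod (w $ j))"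
    by (metis (no_types, lifting) norm_mult norm_of_real norm_sum sum.cong)
  also have "\<dots> \<le> (\<Sum>j\<in>UNIV. \<bar>B $ i $ j\<bar>) * cmod (w $ i)"
    unfolding sum_distrib_right using i_max by (intro sum_mono mult_left_mono) auto
  finally have "cmod l \<le> (\<Sum>j\<in>UNIV. \<bar>B $ i $ j\<bar>)" using \<open>0 < cmod (w $ i)\<close> by simp
  also have "\<dots> \<le> (\<Sum>i\<in>UNIV. \<Sum>j\<in>UNIV. \<bar>B $ i $ j\<bar>)"
    by (rule member_le_sum[where f="\<lambda>i. \<Sum>j\<in>UNIV. \<bar>B $ i $ j\<bar>"]) (auto intro: sum_nonneg)
  finally show "x \<le> (\<Sum>i\<in>UNIV. \<Sum>j\<in>UNIV. \<bar>B $ i $ j\<bar>)" using x by simp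
qed

lemma abs_eigenvalue_le_spec_radius:
  fixes B :: "real^'n^'n"
  assumes "B *v v = c *\<^sub>R v" "v \<noteq> 0"
  shows "\<bar>c\<bar> \<le> spec_radius B"
proof -
  define cv :: "complex^'n" where "cv = (\<chi> i. complex_of_real (v $ i))"
  have "cv \<noteq> 0" using assms(2) unfolding cv_def by (simp add: vec_eq_iff)
  moreover have "(\<chi> i j. complex_of_real (B $ i $ j)) *v cv = complex_of_real c *s cv"
    using arg_cong[OF assms(1), of "\<lambda>u. complex_of_real (u $ i)" for i]
    unfolding cv_def by (simp add: vec_eq_iff matrix_vector_mult_def)
  ultimately show ?thesis
    unfolding spec_radius_def using bdd_above_eigenvalue_norms[of B]
    by (intro cSup_upper) (auto intro!: exI[of _ "complex_of_real c"])
qed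

(* A minimiser of the Rayleigh quotient is an eigenvector for the least eigenvalue mu of A,
   and 1 / mu is then an eigenvalue of the inverse. *)
lemma norm_sq_le_spec_radius_inv:
  fixes A :: "real^'n^'n"
  assumes sym: "\<And>v w. w \<bullet> (A *v v) = v \<bullet> (A *v w)" and psd: "\<And>w. 0 \<le> w \<bullet> (A *v w)"
    and "invertible A"
  shows "0 < spec_radius (matrix_inv A)" and "(norm w)\<^sup>2 \<le> spec_radius (matrix_inv A) * (w \<bullet> (A *v w))"
proof -
  obtain v where v: "norm v = 1" and min: "\<And>w. (v \<bullet> (A *v v)) * (norm w)\<^sup>2 \<le> w \<bullet> (A *v w)"
    using rayleigh_min_attained[of A] by blast
  define \<mu> where "\<mu> = v \<bullet> (A *v v)"
  have Av: "A *v v = \<mu> *\<^sub>R v"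
    using rayleigh_min_eigenvector[OF sym v min[folded \<mu>_def] \<mu>_def] .
  have "v \<noteq> 0" using v by auto
  have v_eq: "v = \<mu> *\<^sub>R (matrix_inv A *v v)"
    using matrix_inv_left[OF \<open>invertible A\<close>] Av
    by (metis matrix_vector_mul_assoc matrix_vector_mul_lid matrix_vector_mult_scaleR)
  then have "\<mu> \<noteq> 0" using \<open>v \<noteq> 0\<close> by auto
  then have "0 < \<mu>" using psd[of v] unfolding \<mu>_def by simp
  have "matrix_inv A *v v = (1 / \<mu>) *\<^sub>R v"
    using v_eq \<open>\<mu> \<noteq> 0\<close> by (metis scaleR_scaleR divide_inverse_commute divide_self_if scaleR_one)
  then have "1 / \<mu> \<le> spec_radius (matrix_inv A)"
    using abs_eigenvalue_le_spec_radius[OF _ \<open>v \<noteq> 0\<close>] \<open>0 < \<mu>\<close> by fastforce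
  then show "0 < spec_radius (matrix_inv A)" using \<open>0 < \<mu>\<close> by (meson divide_pos_pos less_le_trans zero_less_one)
  have "(norm w)\<^sup>2 \<le> 1 / \<mu> * (w \<bullet> (A *v w))"
    using min[of w] \<open>0 < \<mu>\<close> unfolding \<mu>_def[symmetric] by (simp add: field_simps)
  also have "\<dots> \<le> spec_radius (matrix_inv A) * (w \<bullet> (A *v w))"
    using \<open>1 / \<mu> \<le> spec_radius (matrix_inv A)\<close> psd by (rule mult_right_mono)
  finally show "(norm w)\<^sup>2 \<le> spec_radius (matrix_inv A) * (w \<bullet> (A *v w))" .
qed

lemma norm_sq_ls_error_le:
  fixes xs :: "nat \<Rightarrow> real^'n" and e :: "nat \<Rightarrow> real"
  assumes "invertible (\<Sum>i\<in>I. outer (xs i))"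
  defines "A \<equiv> \<Sum>i\<in>I. outer (xs i)"
  shows "0 < spec_radius (matrix_inv A)"
    and "(norm (matrix_inv A *v (\<Sum>i\<in>I. e i *\<^sub>R xs i)))\<^sup>2 \<le> spec_radius (matrix_inv A) * (\<Sum>i\<in>I. (e i)\<^sup>2)"
proof -
  have sym: "w \<bullet> (A *v v) = v \<bullet> (A *v w)" for v w
    unfolding A_def inner_sum_outer_mult_vec by (simp add: mult.commute)
  have quad: "w \<bullet> (A *v w) = (\<Sum>i\<in>I. (xs i \<bullet> w)\<^sup>2)" for w
    unfolding A_def inner_sum_outer_mult_vec by (simp add: power2_eq_square)
  have "invertible A" using assms(1) unfolding A_def .
  have psd: "0 \<le> w \<bullet> (A *v w)" for w
    unfolding quad by (simp add: sum_nonneg)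
  note spec = norm_sq_le_spec_radius_inv[OF sym psd \<open>invertible A\<close>]
  show "0 < spec_radius (matrix_inv A)" by (rule spec(1))
  define u where "u = matrix_inv A *v (\<Sum>i\<in>I. e i *\<^sub>R xs i)"
  have "A *v u = (\<Sum>i\<in>I. e i *\<^sub>R xs i)"
    unfolding u_def by (simp add: matrix_vector_mul_assoc matrix_inv_right[OF \<open>invertible A\<close>])
  then have "(\<Sum>i\<in>I. (xs i \<bullet> u)\<^sup>2) = (\<Sum>i\<in>I. e i * (xs i \<bullet> u))"
    using quad[of u] by (simp add: inner_sum_right inner_commute)
  then have "2 * (\<Sum>i\<in>I. (xs i \<bullet> u)\<^sup>2) = (\<Sum>i\<in>I. 2 * (e i * (xs i \<bullet> u)))"
    by (simp add: sum_distrib_left)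
  also have "\<dots> \<le> (\<Sum>i\<in>I. (e i)\<^sup>2 + (xs i \<bullet> u)\<^sup>2)"
    by (intro sum_mono) (metis mult.assoc sum_squares_bound)
  finally have "u \<bullet> (A *v u) \<le> (\<Sum>i\<in>I. (e i)\<^sup>2)"
    unfolding quad by (simp add: sum.distrib)
  then show "(norm (matrix_inv A *v (\<Sum>i\<in>I. e i *\<^sub>R xs i)))\<^sup>2 \<le> spec_radius (matrix_inv A) * (\<Sum>i\<in>I. (e i)\<^sup>2)"
    using spec(2)[of u] spec(1) unfolding u_def[symmetric]
    by (meson less_imp_le mult_left_mono order_trans)
qed

lemma tendsto_ls_error_zero:
  fixes xs :: "nat \<Rightarrow> real^'n" and e :: "nat \<Rightarrow> real"
  assumes "invertible (\<Sum>i\<in>{1..n0}. outer (xs i))"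
    and lim: "(\<lambda>n. real n * spec_radius (matrix_inv (\<Sum>i\<in>{1..n}. outer (xs i)))) \<longlonglongrightarrow> 0"
    and bounded: "\<forall>\<^sub>F n in sequentially. (\<Sum>i\<in>{1..n}. (e i)\<^sup>2) \<le> K * real n"
  shows "(\<lambda>n. matrix_inv (\<Sum>i\<in>{1..n}. outer (xs i)) *v (\<Sum>i\<in>{1..n}. e i *\<^sub>R xs i)) \<longlonglongrightarrow> 0"
proof -
  define \<rho> where "\<rho> n = spec_radius (matrix_inv (\<Sum>i\<in>{1..n}. outer (xs i)))" for n
  define u where "u n = matrix_inv (\<Sum>i\<in>{1..n}. outer (xs i)) *v (\<Sum>i\<in>{1..n}. e i *\<^sub>R xs i)" for n
  have bound: "\<forall>\<^sub>F n in sequentially. (norm (u n))\<^sup>2 \<le> K * (real n * \<rho> n)"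
    using bounded eventually_ge_at_top[of n0]
  proof eventually_elim
    case (elim n)
    have "invertible (\<Sum>i\<in>{1..n}. outer (xs i))"
      by (rule invertible_sum_outer_mono[OF assms(1)]) (use elim(2) in auto)
    note ls = norm_sq_ls_error_le[OF this]
    have "(norm (u n))\<^sup>2 \<le> \<rho> n * (\<Sum>i\<in>{1..n}. (e i)\<^sup>2)" unfolding u_def \<rho>_def by (rule ls(2))
    also have "\<dots> \<le> \<rho> n * (K * real n)"
      using ls(1) unfolding \<rho>_def by (intro mult_left_mono[OF elim(1)]) simp
    finally show ?case by (simp add: algebra_simps)
  qed
  have "(\<lambda>n. K * (real n * \<rho> n)) \<longlonglongrightarrow> 0"
    using tendsto_mult_right_zero[OF lim] unfolding \<rho>_def .
  then have "(\<lambda>n. (norm (u n))\<^sup>2) \<longlonglongrightarrow> 0"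
    by (intro real_tendsto_sandwich[where f="\<lambda>_. 0", OF _ bound tendsto_const]) simp_all
  then have "(\<lambda>n. sqrt ((norm (u n))\<^sup>2)) \<longlonglongrightarrow> sqrt 0"
    by (rule tendsto_real_sqrt)
  then have "(\<lambda>n. norm (u n)) \<longlonglongrightarrow> 0" by simp
  then show ?thesis unfolding u_def by (simp add: tendsto_norm_zero_iff)
qed

theorem theorem5:
  fixes M :: "'a measure"
    and x :: "nat \<Rightarrow> 'a \<Rightarrow> real^'p"
    and \<epsilon> :: "nat \<Rightarrow> 'a \<Rightarrow> real"
    and Z :: "'a \<Rightarrow> real"
    and \<beta> :: "real^'p"
  assumes "prob_space M"
    and "\<And>i. x i \<in> borel_measurable M"
    and "\<And>n. \<epsilon> n \<in> borel_measurable M"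
    and "Z \<in> borel_measurable M"
    and "pairwise_PQD M \<epsilon>"
    and "stoch_dominated M \<epsilon> Z"
    and "integrable M (\<lambda>\<omega>. (Z \<omega>)\<^sup>2)"
    and "(\<Sum>j. \<Sum>k\<in>{1..<j}.
           \<integral>\<^sup>+ t. indicator {real j..} t *
             ennreal (1 / t\<^sup>2 *
               (G_cov M (\<lambda>\<omega>. max (\<epsilon> k \<omega>) 0) (\<lambda>\<omega>. max (\<epsilon> j \<omega>) 0) (sqrt t)
              + G_cov M (\<lambda>\<omega>. max (- \<epsilon> k \<omega>) 0) (\<lambda>\<omega>. max (- \<epsilon> j \<omega>) 0) (sqrt t)))
           \<partial>lborel) < \<infinity>"
    and "\<exists>n0\<ge>CARD('p). AE \<omega> in M. invertible (XtX x n0 \<omega>)"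
    and "AE \<omega> in M. (\<lambda>n. real n * spec_radius (matrix_inv (XtX x n \<omega>))) \<longlonglongrightarrow> 0"
  shows "AE \<omega> in M. (\<lambda>n. beta_hat \<beta> x \<epsilon> n \<omega>) \<longlonglongrightarrow> \<beta>"
proof -
  interpret prob_space M by fact
  obtain n0 where "AE \<omega> in M. invertible (XtX x n0 \<omega>)" using assms(9) by blast
  moreover have "AE \<omega> in M. \<exists>K. \<forall>\<^sub>F n in sequentially. (\<Sum>i\<in>{1..n}. (\<epsilon> i \<omega>)\<^sup>2) \<le> K * real n"
    using assms(3-8) by (rule AE_sum_sq_errors_linear_bound)
  ultimately show ?thesis
    using assms(10)
  proof eventually_elim
    case (elim \<omega>)
    then obtain K where "\<forall>\<^sub>F n in sequentially. (\<Sum>i\<in>{1..n}. (\<epsilon> i \<omega>)\<^sup>2) \<le> K * real n" by blast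
    with elim have "(\<lambda>n. matrix_inv (XtX x n \<omega>) *v Xteps x \<epsilon> n \<omega>) \<longlonglongrightarrow> 0"
      unfolding XtX_eq_sum_outer Xteps_def by (intro tendsto_ls_error_zero) auto
    then show ?case
      unfolding beta_hat_def using tendsto_add[OF tendsto_const, of _ 0 sequentially \<beta>] by simp
  qed
qed

end
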